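(* Let $d\ge4$ and $1\le p<d/2$ be fixed integers. Then for every positive integer $i$, $$\frac{\mathbf{E}(YX_i)}{\mathbf{E}(Y)}\to\lambda_i(1+\delta_i)\qquad\text{as } n\to\infty \text{ (along even } n),$$ where $\lambda_i=\frac{(d-1)^i}{2i}$ and $$\delta_i=\left(-\frac{d^2-4dp+4p^2-d}{d(d-1)}\right)^i .$$ Moreover, $\delta_i>-1$ for all $i\ge1$.
   Context: Configuration model: take $dn$ labelled points partitioned into $n$ labelled cells of $d$ points each. A pairing is a partition of the points into pairs; $\mathcal{P}_{n,d}$ is the uniform probability space on all pairings, and $G(F)$ is the $d$-regular multigraph obtained by contracting each cell of $F$ to a vertex. A $p$-orientation of a pairing is a choice, for each pair, of one point as its in-point and the other as its out-point, such that every cell contains exactly $p$ in-points or exactly $p$ out-points. $Y=Y(F)$ is the number of $p$-orientations of $F\in\mathcal{P}_{n,d}$. For $i\ge1$, $X_i=X_i(F)$ is the number of $i$-cycles in $F$, i.e. sets of $i$ pairs of $F$ whose corresponding edges form a cycle of length $i$ in $G(F)$ (for $i=1$ a loop, for $i=2$ a double edge). *)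

theory Defs
  imports Complex_Main
begin

definition cm_points :: "nat \<Rightarrow> nat \<Rightarrow> nat set" where
  "cm_points d n = {..<d * n}"

definition cm_cell :: "nat \<Rightarrow> nat \<Rightarrow> nat" where
  "cm_cell d x = x div d"

definition pairings :: "nat \<Rightarrow> nat \<Rightarrow> nat set set set" where
  "pairings d n = {F. (\<forall>e\<in>F. card e = 2 \<and> e \<subseteq> cm_points d n) \<and>
                      (\<forall>x\<in>cm_points d n. \<exists>!e. e \<in> F \<and> x \<in> e)}"

text \<open>A p-orientation is determined by its set S of in-points: each pair has exactly one
  in-point, and every cell has exactly p in-points or exactly p out-points.\<close>
definition p_orientations :: "nat \<Rightarrow> nat \<Rightarrow> nat \<Rightarrow> nat set set \<Rightarrow> nat set set" where
  "p_orientations d p n F = {S. S \<subseteq> cm_points d n \<and> (\<forall>e\<in>F. card (e \<inter> S) = 1) \<and>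
      (\<forall>v<n. card {x\<in>cm_points d n. cm_cell d x = v \<and> x \<in> S} = p \<or>
             card {x\<in>cm_points d n. cm_cell d x = v \<and> x \<notin> S} = p)}"

definition numY :: "nat \<Rightarrow> nat \<Rightarrow> nat \<Rightarrow> nat set set \<Rightarrow> nat" where
  "numY d p n F = card (p_orientations d p n F)"

text \<open>An i-cycle: a set C of i pairs forming a cycle of length i in G(F) (i=1 loop,
  i=2 double edge): distinct cells v_0..v_{i-1} and an enumeration of C such that the
  j-th pair joins v_j and v_{(j+1) mod i}.\<close>
definition is_cycle :: "nat \<Rightarrow> nat \<Rightarrow> nat set set \<Rightarrow> bool" where
  "is_cycle d i C \<longleftrightarrow> (\<exists>v e. inj_on v {..<i} \<and> bij_betw e {..<i} C \<and>
      (\<forall>j<i. cm_cell d ` (e j) = {v j, v ((j + 1) mod i)}))"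

definition numX :: "nat \<Rightarrow> nat \<Rightarrow> nat set set \<Rightarrow> nat" where
  "numX d i F = card {C. C \<subseteq> F \<and> is_cycle d i C}"

definition cm_expect :: "nat \<Rightarrow> nat \<Rightarrow> (nat set set \<Rightarrow> real) \<Rightarrow> real" where
  "cm_expect d n f = (\<Sum>F\<in>pairings d n. f F) / real (card (pairings d n))"

definition lambda_i :: "nat \<Rightarrow> nat \<Rightarrow> real" where
  "lambda_i d i = (real d - 1) ^ i / (2 * real i)"

definition delta_i :: "nat \<Rightarrow> nat \<Rightarrow> nat \<Rightarrow> real" where
  "delta_i d p i = (- ((real d)^2 - 4 * real d * real p + 4 * (real p)^2 - real d)
                       / (real d * (real d - 1))) ^ i"

end

theory Submission
  imports Defs "HOL-Library.FuncSet"
begin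

definition crossing_pairs :: "'a set \<Rightarrow> 'a set \<Rightarrow> 'a set set \<Rightarrow> bool" where
  "crossing_pairs X S D \<longleftrightarrow>
     (\<forall>e\<in>D. card e = 2 \<and> e \<subseteq> X \<and> card (e \<inter> S) = 1) \<and> pairwise disjnt D"

definition crossing_matchings :: "'a set \<Rightarrow> 'a set \<Rightarrow> 'a set set set" where
  "crossing_matchings X S = {F. crossing_pairs X S F \<and> \<Union>F = X}"

lemma unique_cover_iff_disjoint_cover:
  assumes "\<forall>e\<in>F. e \<subseteq> X"
  shows "(\<forall>x\<in>X. \<exists>!e. e \<in> F \<and> x \<in> e) \<longleftrightarrow> pairwise disjnt F \<and> \<Union>F = X"
  using assms unfolding pairwise_def disjnt_def by blast

lemma crossing_pairs_subset: "crossing_pairs X S F \<Longrightarrow> D \<subseteq> F \<Longrightarrow> crossing_pairs X S D"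
  unfolding crossing_pairs_def by (meson pairwise_subset subsetD)

lemma crossing_pairs_disjoint:
  "crossing_pairs X S D \<Longrightarrow> e \<in> D \<Longrightarrow> e' \<in> D \<Longrightarrow> e \<noteq> e' \<Longrightarrow> e \<inter> e' = {}"
  unfolding crossing_pairs_def pairwise_def disjnt_def by blast

lemma crossing_pairsD:
  "crossing_pairs X S D \<Longrightarrow> e \<in> D \<Longrightarrow> card e = 2 \<and> e \<subseteq> X \<and> card (e \<inter> S) = 1"
  unfolding crossing_pairs_def by simp

lemma finite_crossing_matchings: "finite X \<Longrightarrow> finite (crossing_matchings X S)"
  by (rule finite_subset[of _ "Pow (Pow X)"]) (auto simp: crossing_matchings_def)

lemma crossing_matchings_Diff:
  assumes F: "F \<in> crossing_matchings X S" and D: "D \<subseteq> F"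
  shows "F - D \<in> crossing_matchings (X - \<Union>D) S"
proof -
  have pairs: "crossing_pairs X S F" and cover: "\<Union>F = X"
    using F unfolding crossing_matchings_def by auto
  have "e \<inter> \<Union>D = {}" if "e \<in> F - D" for e
    using crossing_pairs_disjoint[OF pairs] that D by blast
  then show ?thesis
    using pairs cover unfolding crossing_matchings_def crossing_pairs_def
    by (auto intro: pairwise_subset)
qed

lemma crossing_matchings_Un:
  assumes D: "crossing_pairs X S D" and F: "F \<in> crossing_matchings (X - \<Union>D) S"
  shows "F \<union> D \<in> crossing_matchings X S"
proof -
  have pairs: "crossing_pairs (X - \<Union>D) S F" and cover: "\<Union>F = X - \<Union>D"
    using F unfolding crossing_matchings_def by auto
  have "disjnt e e'" if "e \<in> F \<union> D" "e' \<in> F \<union> D" "e \<noteq> e'" for e e'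
  proof -
    have "e \<subseteq> X - \<Union>D" if "e \<in> F" for e
      using cover that by blast
    then show ?thesis
      using that crossing_pairs_disjoint[OF pairs] crossing_pairs_disjoint[OF D]
      unfolding disjnt_def by blast
  qed
  then have "pairwise disjnt (F \<union> D)"
    unfolding pairwise_def by blast
  moreover have "\<forall>e\<in>F \<union> D. card e = 2 \<and> e \<subseteq> X \<and> card (e \<inter> S) = 1"
    using pairs D unfolding crossing_pairs_def by blast
  moreover have "\<Union>(F \<union> D) = X"
    using cover D unfolding crossing_pairs_def by blast
  ultimately show ?thesis
    unfolding crossing_matchings_def crossing_pairs_def by blast
qed

lemma bij_betw_crossing_matchings_Diff:
  assumes "crossing_pairs X S D"
  shows "bij_betw (\<lambda>F. F - D) {F \<in> crossing_matchings X S. D \<subseteq> F}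
           (crossing_matchings (X - \<Union>D) S)"
proof (rule bij_betw_byWitness[where f' = "\<lambda>F. F \<union> D"])
  show "\<forall>F\<in>crossing_matchings (X - \<Union>D) S. F \<union> D - D = F"
  proof
    fix F assume F: "F \<in> crossing_matchings (X - \<Union>D) S"
    have "e \<noteq> {}" "e \<subseteq> X - \<Union>D" if "e \<in> F" for e
      using F that unfolding crossing_matchings_def crossing_pairs_def by auto
    then have "F \<inter> D = {}" by blast
    then show "F \<union> D - D = F" by blast
  qed
  show "(\<lambda>F. F - D) ` {F \<in> crossing_matchings X S. D \<subseteq> F} \<subseteq> crossing_matchings (X - \<Union>D) S"
    using crossing_matchings_Diff by blast
  show "(\<lambda>F. F \<union> D) ` crossing_matchings (X - \<Union>D) S \<subseteq> {F \<in> crossing_matchings X S. D \<subseteq> F}"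
    using crossing_matchings_Un[OF assms] by blast
qed blast

lemma card_UN_card_eq_1:
  assumes "finite D" "\<And>e. e \<in> D \<Longrightarrow> card (g e) = 1"
    "\<And>e e'. e \<in> D \<Longrightarrow> e' \<in> D \<Longrightarrow> e \<noteq> e' \<Longrightarrow> g e \<inter> g e' = {}"
  shows "card (\<Union>e\<in>D. g e) = card D"
proof -
  have "card (\<Union>e\<in>D. g e) = (\<Sum>e\<in>D. card (g e))"
    using assms by (intro card_UN_disjoint) (auto intro: card_ge_0_finite)
  also have "\<dots> = card D"
    using assms(2) by simp
  finally show ?thesis .
qed

lemma card_crossing_pairs_Union:
  assumes D: "crossing_pairs X S D" and X: "finite X"
  shows "card (\<Union>D \<inter> S) = card D" "card (\<Union>D - S) = card D"
proof -
  have fin: "finite D"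
    using D X unfolding crossing_pairs_def by (meson Pow_iff finite_Pow_iff finite_subset subsetI)
  have one: "card (e \<inter> S) = 1" "card (e - S) = 1" if "e \<in> D" for e
  proof -
    have "card e = 2" "card (e \<inter> S) = 1" "finite e"
      using D X that unfolding crossing_pairs_def by (auto intro: finite_subset)
    then show "card (e \<inter> S) = 1" "card (e - S) = 1"
      using card_Int_Diff[of e S] by auto
  qed
  have "\<Union>D \<inter> S = (\<Union>e\<in>D. e \<inter> S)"
    by blast
  also have "card \<dots> = card D"
    using one(1) crossing_pairs_disjoint[OF D] by (intro card_UN_card_eq_1[OF fin]) blast+
  finally show "card (\<Union>D \<inter> S) = card D" .
  have "\<Union>D - S = (\<Union>e\<in>D. e - S)"
    by blast
  also have "card \<dots> = card D"
    using one(2) crossing_pairs_disjoint[OF D] by (intro card_UN_card_eq_1[OF fin]) blast+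
  finally show "card (\<Union>D - S) = card D" .
qed

lemma crossing_matchings_balanced:
  assumes "F \<in> crossing_matchings X S" "finite X"
  shows "card (X \<inter> S) = card (X - S)"
  using card_crossing_pairs_Union[of X S F] assms unfolding crossing_matchings_def by auto

lemma crossing_pair_eq:
  assumes "card e = 2" "card (e \<inter> S) = 1" "a \<in> e" "a \<in> S"
  obtains b where "b \<notin> S" "e = {a, b}"
proof -
  obtain b where "e = {a, b}" "a \<noteq> b"
    using assms(1,3) by (metis card_2_iff doubleton_eq_iff insertE singletonD)
  moreover have "b \<notin> S"
  proof
    assume "b \<in> S"
    then have "e \<inter> S = {a, b}" using \<open>e = {a, b}\<close> assms(4) by blast
    then show False using assms(2) \<open>a \<noteq> b\<close> by simp
  qed
  ultimately show ?thesis using that by blast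
qed

lemma crossing_matchings_empty: "crossing_matchings {} S = {{}}"
proof -
  have "F = {}" if "F \<in> crossing_matchings {} S" for F
  proof -
    have "card e = 2" "e = {}" if "e \<in> F" for e
      using \<open>F \<in> crossing_matchings {} S\<close> that
      unfolding crossing_matchings_def crossing_pairs_def by auto
    then show ?thesis
      by fastforce
  qed
  moreover have "{} \<in> crossing_matchings {} S"
    by (simp add: crossing_matchings_def crossing_pairs_def)
  ultimately show ?thesis
    by blast
qed

lemma card_crossing_matchings_recurrence:
  assumes X: "finite X" and a: "a \<in> X \<inter> S"
  shows "card (crossing_matchings X S) = (\<Sum>b\<in>X - S. card (crossing_matchings (X - {a, b}) S))"
proof -
  define M where "M b = {F \<in> crossing_matchings X S. {{a, b}} \<subseteq> F}" for b
  have cover: "crossing_matchings X S = (\<Union>b\<in>X - S. M b)"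
  proof (intro equalityI subsetI)
    fix F assume F: "F \<in> crossing_matchings X S"
    then obtain e where e: "e \<in> F" "a \<in> e"
      using a unfolding crossing_matchings_def by blast
    then have "card e = 2" "e \<subseteq> X" "card (e \<inter> S) = 1"
      using F unfolding crossing_matchings_def crossing_pairs_def by auto
    then obtain b where b: "b \<notin> S" "e = {a, b}"
      using a e(2) crossing_pair_eq by (metis IntD2)
    then have "b \<in> X - S" "F \<in> M b"
      using F e \<open>e \<subseteq> X\<close> unfolding M_def by auto
    then show "F \<in> (\<Union>b\<in>X - S. M b)"
      by blast
  qed (unfold M_def, blast)
  have disjoint: "M b \<inter> M b' = {}" if "b \<in> X - S" "b' \<in> X - S" "b \<noteq> b'" for b b'
  proof (rule ccontr)
    assume "M b \<inter> M b' \<noteq> {}"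
    then obtain F where F: "crossing_pairs X S F" "{a, b} \<in> F" "{a, b'} \<in> F"
      unfolding M_def crossing_matchings_def by blast
    have "{a, b} \<noteq> {a, b'}"
      using a that by (auto simp: doubleton_eq_iff)
    then have "{a, b} \<inter> {a, b'} = {}"
      using crossing_pairs_disjoint[OF F] by blast
    then show False
      by blast
  qed
  have "card (M b) = card (crossing_matchings (X - {a, b}) S)" if "b \<in> X - S" for b
  proof -
    have "a \<noteq> b"
      using a that by blast
    then have "crossing_pairs X S {{a, b}}"
      using a that unfolding crossing_pairs_def by (auto simp: Int_insert_left)
    from bij_betw_same_card[OF bij_betw_crossing_matchings_Diff[OF this]] show ?thesis
      unfolding M_def by simp
  qed
  moreover have "card (crossing_matchings X S) = (\<Sum>b\<in>X - S. card (M b))"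
    unfolding cover using X disjoint
    by (intro card_UN_disjoint) (auto simp: M_def finite_crossing_matchings)
  ultimately show ?thesis
    by simp
qed

lemma card_crossing_matchings:
  assumes "finite X" "card (X \<inter> S) = k" "card (X - S) = k"
  shows "card (crossing_matchings X S) = fact k"
  using assms
proof (induction k arbitrary: X)
  case 0
  then have "X \<inter> S = {}" "X - S = {}"
    by (simp_all add: card_eq_0_iff)
  then have "X = {}"
    by blast
  then show ?case
    by (simp add: crossing_matchings_empty)
next
  case (Suc k)
  obtain a where a: "a \<in> X \<inter> S"
    using Suc.prems(2) by (metis card.empty ex_in_conv nat.distinct(1))
  have "card (crossing_matchings (X - {a, b}) S) = fact k" if "b \<in> X - S" for b
  proof (rule Suc.IH)
    have "(X - {a, b}) \<inter> S = (X \<inter> S) - {a}" "(X - {a, b}) - S = (X - S) - {b}"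
      using a that by auto
    then show "card ((X - {a, b}) \<inter> S) = k" "card ((X - {a, b}) - S) = k"
      using a that Suc.prems(2,3) by (simp_all add: card_Diff_singleton)
  qed (use Suc.prems(1) in simp)
  then show ?case
    using card_crossing_matchings_recurrence[OF Suc.prems(1) a] Suc.prems(3) by simp
qed

lemma card_crossing_matchings_containing:
  assumes X: "finite X" "card X = 2 * k" "S \<subseteq> X"
  shows "card {F \<in> crossing_matchings X S. D \<subseteq> F} =
           (if card S = k \<and> crossing_pairs X S D then fact (k - card D) else 0)"
proof (cases "card S = k \<and> crossing_pairs X S D")
  case True
  then have D: "crossing_pairs X S D" and "card S = k" by auto
  have UD: "\<Union>D \<subseteq> X"
    using D unfolding crossing_pairs_def by blast
  then have fin: "finite S" "finite (\<Union>D)"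
    using X(1,3) by (auto intro: finite_subset)
  have "card (X - S) = k"
    using X \<open>card S = k\<close> by (simp add: card_Diff_subset fin)
  moreover have "(X - \<Union>D) \<inter> S = S - (\<Union>D \<inter> S)" "(X - \<Union>D) - S = (X - S) - (\<Union>D - S)"
    using UD X(3) by blast+
  ultimately have "card ((X - \<Union>D) \<inter> S) = k - card D" "card ((X - \<Union>D) - S) = k - card D"
    using card_crossing_pairs_Union[OF D X(1)] \<open>card S = k\<close> fin UD
    by (simp_all add: card_Diff_subset Diff_mono)
  then have "card (crossing_matchings (X - \<Union>D) S) = fact (k - card D)"
    using X(1) by (intro card_crossing_matchings) auto
  then show ?thesis
    using True bij_betw_same_card[OF bij_betw_crossing_matchings_Diff[OF D]] by simp
next
  case False
  have "\<not> (F \<in> crossing_matchings X S \<and> D \<subseteq> F)" for F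
  proof
    assume F: "F \<in> crossing_matchings X S \<and> D \<subseteq> F"
    have "card S = card (X - S)"
      using crossing_matchings_balanced[of F X S] F X by (simp add: Int_absorb1)
    then have "card S = k"
      using X by (simp add: card_Diff_subset finite_subset)
    moreover have "crossing_pairs X S D"
      using F crossing_pairs_subset unfolding crossing_matchings_def by blast
    ultimately show False
      using False by simp
  qed
  then have "{F \<in> crossing_matchings X S. D \<subseteq> F} = {}"
    by blast
  then show ?thesis
    unfolding if_not_P[OF False] by (metis card.empty)
qed

definition in_point_sets :: "nat \<Rightarrow> nat \<Rightarrow> nat \<Rightarrow> nat set set" where
  "in_point_sets d p n = {S. S \<subseteq> cm_points d n \<and>
      (\<forall>v<n. card {x\<in>cm_points d n. cm_cell d x = v \<and> x \<in> S} = p \<or>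
             card {x\<in>cm_points d n. cm_cell d x = v \<and> x \<notin> S} = p)}"

definition balanced_in_point_sets :: "nat \<Rightarrow> nat \<Rightarrow> nat \<Rightarrow> nat set set" where
  "balanced_in_point_sets d p m = {S \<in> in_point_sets d p (2 * m). card S = d * m}"

definition cycles_on :: "nat \<Rightarrow> nat \<Rightarrow> nat \<Rightarrow> nat set set set" where
  "cycles_on d i n = {C. C \<subseteq> Pow (cm_points d n) \<and> is_cycle d i C}"

definition crossing_cycles :: "nat \<Rightarrow> nat \<Rightarrow> nat \<Rightarrow> nat set \<Rightarrow> nat set set set" where
  "crossing_cycles d i n S = {C. crossing_pairs (cm_points d n) S C \<and> is_cycle d i C}"

lemma finite_cm_points [simp]: "finite (cm_points d n)"
  by (simp add: cm_points_def)

lemma card_cm_points [simp]: "card (cm_points d n) = d * n"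
  by (simp add: cm_points_def)

lemma finite_pairings: "finite (pairings d n)"
  by (rule finite_subset[of _ "Pow (Pow (cm_points d n))"]) (auto simp: pairings_def)

lemma finite_in_point_sets: "finite (in_point_sets d p n)"
  by (rule finite_subset[of _ "Pow (cm_points d n)"]) (auto simp: in_point_sets_def)

lemma finite_balanced_in_point_sets: "finite (balanced_in_point_sets d p m)"
  unfolding balanced_in_point_sets_def using finite_in_point_sets by simp

lemma finite_cycles_on: "finite (cycles_on d i n)"
  by (rule finite_subset[of _ "Pow (Pow (cm_points d n))"]) (auto simp: cycles_on_def)

lemma finite_crossing_cycles: "finite (crossing_cycles d i n S)"
  by (rule finite_subset[of _ "Pow (Pow (cm_points d n))"])
    (auto simp: crossing_cycles_def crossing_pairs_def)

lemma card_cycle: "is_cycle d i C \<Longrightarrow> card C = i"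
  unfolding is_cycle_def by (metis bij_betw_same_card card_lessThan)

lemma pairing_crossing_iff:
  "F \<in> pairings d n \<and> (\<forall>e\<in>F. card (e \<inter> S) = 1) \<longleftrightarrow>
     F \<in> crossing_matchings (cm_points d n) S"
proof (cases "\<forall>e\<in>F. e \<subseteq> cm_points d n")
  case True
  note cover = unique_cover_iff_disjoint_cover[OF True]
  show ?thesis
    unfolding pairings_def crossing_matchings_def crossing_pairs_def mem_Collect_eq cover
    by blast
next
  case False
  then show ?thesis
    unfolding pairings_def crossing_matchings_def crossing_pairs_def by blast
qed

lemma numY_eq: "numY d p n F = card {S \<in> in_point_sets d p n. \<forall>e\<in>F. card (e \<inter> S) = 1}"
  unfolding numY_def p_orientations_def in_point_sets_def by (rule arg_cong[where f = card]) blast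

lemma numX_eq: "F \<in> pairings d n \<Longrightarrow> numX d i F = card {C \<in> cycles_on d i n. C \<subseteq> F}"
  unfolding numX_def cycles_on_def pairings_def by (rule arg_cong[where f = card]) blast

lemma sum_card_Collect_swap:
  assumes "finite A" "finite B"
  shows "(\<Sum>x\<in>A. card {y\<in>B. R x y}) = (\<Sum>y\<in>B. card {x\<in>A. R x y})"
proof -
  have "(\<Sum>x\<in>A. card {y\<in>B. R x y}) = (\<Sum>x\<in>A. \<Sum>y\<in>B. if R x y then 1 else 0)"
    using assms by (simp add: sum.If_cases Int_def)
  also have "\<dots> = (\<Sum>y\<in>B. \<Sum>x\<in>A. if R x y then 1 else 0)"
    by (rule sum.swap)
  also have "\<dots> = (\<Sum>y\<in>B. card {x\<in>A. R x y})"
    using assms by (simp add: sum.If_cases Int_def)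
  finally show ?thesis .
qed

lemma sum_numY_eq_sum_crossing_matchings:
  "(\<Sum>F\<in>pairings d n. numY d p n F) =
     (\<Sum>S\<in>in_point_sets d p n. card (crossing_matchings (cm_points d n) S))"
proof -
  have "(\<Sum>F\<in>pairings d n. numY d p n F) =
      (\<Sum>S\<in>in_point_sets d p n. card {F \<in> pairings d n. \<forall>e\<in>F. card (e \<inter> S) = 1})"
    unfolding numY_eq by (rule sum_card_Collect_swap[OF finite_pairings finite_in_point_sets])
  also have "\<dots> = (\<Sum>S\<in>in_point_sets d p n. card (crossing_matchings (cm_points d n) S))"
    using pairing_crossing_iff by (intro sum.cong refl arg_cong[where f = card] Collect_cong) blast
  finally show ?thesis .
qed

lemma sum_numY_numX_eq_sum_crossing_matchings:
  "(\<Sum>F\<in>pairings d n. numY d p n F * numX d i F) =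
     (\<Sum>S\<in>in_point_sets d p n. \<Sum>C\<in>cycles_on d i n.
        card {F \<in> crossing_matchings (cm_points d n) S. C \<subseteq> F})"
proof -
  let ?V = "in_point_sets d p n" and ?C = "cycles_on d i n"
  let ?R = "\<lambda>F SC. (\<forall>e\<in>F. card (e \<inter> fst SC) = 1) \<and> snd SC \<subseteq> F"
  have "numY d p n F * numX d i F = card {SC \<in> ?V \<times> ?C. ?R F SC}" if "F \<in> pairings d n" for F
  proof -
    have "{SC \<in> ?V \<times> ?C. ?R F SC} = {S \<in> ?V. \<forall>e\<in>F. card (e \<inter> S) = 1} \<times> {C \<in> ?C. C \<subseteq> F}"
      by auto
    then show ?thesis
      using that by (simp add: numY_eq numX_eq card_cartesian_product)
  qed
  then have "(\<Sum>F\<in>pairings d n. numY d p n F * numX d i F) =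
      (\<Sum>SC\<in>?V \<times> ?C. card {F \<in> pairings d n. ?R F SC})"
    using sum_card_Collect_swap[of "pairings d n" "?V \<times> ?C" ?R]
    by (simp add: finite_pairings finite_in_point_sets finite_cycles_on)
  also have "\<dots> = (\<Sum>(S, C)\<in>?V \<times> ?C. card {F \<in> crossing_matchings (cm_points d n) S. C \<subseteq> F})"
    using pairing_crossing_iff
    by (intro sum.cong refl) (simp add: case_prod_beta, intro arg_cong[where f = card] Collect_cong, blast)
  finally show ?thesis
    by (simp add: sum.cartesian_product)
qed

lemma card_crossing_matchings_even:
  assumes "S \<in> in_point_sets d p (2 * m)"
  shows "card {F \<in> crossing_matchings (cm_points d (2 * m)) S. D \<subseteq> F} =
    (if card S = d * m \<and> crossing_pairs (cm_points d (2 * m)) S D then fact (d * m - card D) else 0)"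
  using assms by (intro card_crossing_matchings_containing) (auto simp: in_point_sets_def)

lemma sum_numY:
  "(\<Sum>F\<in>pairings d (2 * m). numY d p (2 * m) F) = card (balanced_in_point_sets d p m) * fact (d * m)"
proof -
  have "card (crossing_matchings (cm_points d (2 * m)) S) = (if card S = d * m then fact (d * m) else 0)"
    if "S \<in> in_point_sets d p (2 * m)" for S
    using card_crossing_matchings_even[OF that, of "{}"] by (simp add: crossing_pairs_def)
  then have "(\<Sum>F\<in>pairings d (2 * m). numY d p (2 * m) F) =
      (\<Sum>S\<in>in_point_sets d p (2 * m). if card S = d * m then fact (d * m) else 0)"
    unfolding sum_numY_eq_sum_crossing_matchings by (rule sum.cong[OF refl])
  then show ?thesis
    unfolding balanced_in_point_sets_def sum.inter_filter[OF finite_in_point_sets, symmetric]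
    by simp
qed

lemma sum_numY_numX:
  "(\<Sum>F\<in>pairings d (2 * m). numY d p (2 * m) F * numX d i F) =
     (\<Sum>S\<in>balanced_in_point_sets d p m. card (crossing_cycles d i (2 * m) S)) * fact (d * m - i)"
proof -
  let ?P = "cm_points d (2 * m)" and ?C = "cycles_on d i (2 * m)"
  have "(\<Sum>C\<in>?C. card {F \<in> crossing_matchings ?P S. C \<subseteq> F}) =
      (if card S = d * m then card (crossing_cycles d i (2 * m) S) * fact (d * m - i) else 0)"
    if S: "S \<in> in_point_sets d p (2 * m)" for S
  proof -
    have "(\<Sum>C\<in>?C. card {F \<in> crossing_matchings ?P S. C \<subseteq> F}) =
        (\<Sum>C\<in>?C. if card S = d * m \<and> crossing_pairs ?P S C then fact (d * m - i) else 0)"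
      using card_crossing_matchings_even[OF S] card_cycle unfolding cycles_on_def
      by (intro sum.cong) auto
    also have "\<dots> = (if card S = d * m then card {C \<in> ?C. crossing_pairs ?P S C} * fact (d * m - i) else 0)"
      by (simp add: sum.inter_filter[OF finite_cycles_on, symmetric])
    also have "{C \<in> ?C. crossing_pairs ?P S C} = crossing_cycles d i (2 * m) S"
      unfolding cycles_on_def crossing_cycles_def crossing_pairs_def by blast
    finally show ?thesis .
  qed
  then have "(\<Sum>F\<in>pairings d (2 * m). numY d p (2 * m) F * numX d i F) =
      (\<Sum>S\<in>in_point_sets d p (2 * m).
         if card S = d * m then card (crossing_cycles d i (2 * m) S) * fact (d * m - i) else 0)"
    unfolding sum_numY_numX_eq_sum_crossing_matchings by (rule sum.cong[OF refl])
  then show ?thesis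
    unfolding balanced_in_point_sets_def sum.inter_filter[OF finite_in_point_sets, symmetric]
    by (simp add: sum_distrib_right)
qed

lemma fact_eq_fact_diff_mult_prod:
  "i \<le> k \<Longrightarrow> (fact k :: real) = fact (k - i) * (\<Prod>l<i. real (k - l))"
proof (induction i)
  case (Suc i)
  have "k - i = Suc (k - Suc i)"
    using Suc.prems by simp
  then have step: "(fact (k - i) :: real) = real (k - i) * fact (k - Suc i)"
    by (metis fact_Suc)
  have "(fact k :: real) = fact (k - i) * (\<Prod>l<i. real (k - l))"
    using Suc by simp
  also have "\<dots> = fact (k - Suc i) * ((\<Prod>l<i. real (k - l)) * real (k - i))"
    unfolding step by (simp only: mult_ac)
  also have "\<dots> = fact (k - Suc i) * (\<Prod>l<Suc i. real (k - l))"
    by simp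
  finally show ?case .
qed simp

lemma expectation_ratio_eq:
  assumes "i \<le> d * m"
  shows "cm_expect d (2 * m) (\<lambda>F. real (numY d p (2 * m) F * numX d i F))
           / cm_expect d (2 * m) (\<lambda>F. real (numY d p (2 * m) F))
         = real (\<Sum>S\<in>balanced_in_point_sets d p m. card (crossing_cycles d i (2 * m) S))
           / (real (card (balanced_in_point_sets d p m)) * (\<Prod>l<i. real (d * m - l)))"
proof -
  let ?G = "\<Sum>S\<in>balanced_in_point_sets d p m. card (crossing_cycles d i (2 * m) S)"
  let ?V = "card (balanced_in_point_sets d p m)"
  have "cm_expect d (2 * m) (\<lambda>F. real (numY d p (2 * m) F * numX d i F))
           / cm_expect d (2 * m) (\<lambda>F. real (numY d p (2 * m) F))
      = (\<Sum>F\<in>pairings d (2 * m). real (numY d p (2 * m) F * numX d i F))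
           / (\<Sum>F\<in>pairings d (2 * m). real (numY d p (2 * m) F))"
    unfolding cm_expect_def
    by (cases "pairings d (2 * m) = {}") (simp_all add: finite_pairings)
  also have "\<dots> = real (?G * fact (d * m - i)) / real (?V * fact (d * m))"
    by (simp only: of_nat_sum[symmetric] sum_numY sum_numY_numX)
  also have "\<dots> = real ?G / (real ?V * (\<Prod>l<i. real (d * m - l)))"
    using fact_eq_fact_diff_mult_prod[OF assms] by simp
  finally show ?thesis .
qed

lemma Suc_mod_eq_if: "j < i \<Longrightarrow> Suc j mod i = (if Suc j = i then 0 else Suc j)"
  by (cases "Suc j = i") auto

lemma Suc_mod_less: "j < i \<Longrightarrow> Suc j mod i < i"
  by simp

lemma Suc_mod_inj: "j < i \<Longrightarrow> l < i \<Longrightarrow> Suc j mod i = Suc l mod i \<Longrightarrow> j = l"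
  using Suc_mod_eq_if[of j i] Suc_mod_eq_if[of l i] by (auto split: if_splits)

text \<open>A closed walk of length \<open>i\<close> traverses the pair \<open>{a j, b j}\<close> from \<open>a j\<close> to \<open>b j\<close> and then
  moves inside the cell of \<open>b j\<close> to another point \<open>a (j + 1)\<close>, indices taken mod \<open>i\<close>. It is
  simple if the cells of the \<open>a j\<close> are distinct; then its pairs form an \<open>i\<close>-cycle, and each
  \<open>i\<close>-cycle arises from exactly \<open>2 * i\<close> simple walks (choice of start point and direction).\<close>

definition closed_walks ::
    "nat \<Rightarrow> nat \<Rightarrow> nat \<Rightarrow> nat set \<Rightarrow> ((nat \<Rightarrow> nat) \<times> (nat \<Rightarrow> nat)) set" where
  "closed_walks d i n S = {(a, b). a \<in> {..<i} \<rightarrow>\<^sub>E cm_points d n \<and> b \<in> {..<i} \<rightarrow>\<^sub>E cm_points d n \<and>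
     (\<forall>j<i. cm_cell d (b j) = cm_cell d (a (Suc j mod i)) \<and> b j \<noteq> a (Suc j mod i) \<and>
       (a j \<in> S \<longleftrightarrow> b j \<notin> S))}"

definition simple_closed_walks ::
    "nat \<Rightarrow> nat \<Rightarrow> nat \<Rightarrow> nat set \<Rightarrow> ((nat \<Rightarrow> nat) \<times> (nat \<Rightarrow> nat)) set" where
  "simple_closed_walks d i n S =
     {(a, b) \<in> closed_walks d i n S. inj_on (\<lambda>j. cm_cell d (a j)) {..<i}}"

definition walk_pairs :: "nat \<Rightarrow> (nat \<Rightarrow> nat) \<Rightarrow> (nat \<Rightarrow> nat) \<Rightarrow> nat set set" where
  "walk_pairs i a b = (\<lambda>j. {a j, b j}) ` {..<i}"

lemma finite_closed_walks: "finite (closed_walks d i n S)"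
  by (rule finite_subset[of _ "({..<i} \<rightarrow>\<^sub>E cm_points d n) \<times> ({..<i} \<rightarrow>\<^sub>E cm_points d n)"])
    (auto simp: closed_walks_def finite_PiE)

lemma simple_closed_walks_subset: "simple_closed_walks d i n S \<subseteq> closed_walks d i n S"
  unfolding simple_closed_walks_def by auto

lemma finite_simple_closed_walks: "finite (simple_closed_walks d i n S)"
  using finite_subset[OF simple_closed_walks_subset finite_closed_walks] .

lemma closed_walksD:
  assumes "(a, b) \<in> closed_walks d i n S" "j < i"
  shows "a j \<in> cm_points d n" "b j \<in> cm_points d n"
    "cm_cell d (b j) = cm_cell d (a (Suc j mod i))" "b j \<noteq> a (Suc j mod i)"
    "a j \<in> S \<longleftrightarrow> b j \<notin> S"
  using assms unfolding closed_walks_def by auto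

lemmas simple_closed_walksD = closed_walksD[OF subsetD[OF simple_closed_walks_subset]]

lemma simple_closed_walk_inj_cell:
  assumes "(a, b) \<in> simple_closed_walks d i n S" "j < i" "l < i" "cm_cell d (a j) = cm_cell d (a l)"
  shows "j = l"
  using assms unfolding simple_closed_walks_def inj_on_def by auto

lemma simple_closed_walk_a_neq_b:
  assumes r: "(a, b) \<in> simple_closed_walks d i n S" and "j < i" "l < i"
  shows "a j \<noteq> b l"
proof
  assume eq: "a j = b l"
  then have "cm_cell d (a j) = cm_cell d (a (Suc l mod i))"
    using simple_closed_walksD(3)[OF r \<open>l < i\<close>] by simp
  then have "j = Suc l mod i"
    using simple_closed_walk_inj_cell[OF r] \<open>j < i\<close> \<open>l < i\<close> Suc_mod_less by blast
  then show False
    using simple_closed_walksD(4)[OF r \<open>l < i\<close>] eq by simp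
qed

lemma simple_closed_walk_inj_a:
  assumes "(a, b) \<in> simple_closed_walks d i n S"
  shows "inj_on a {..<i}"
  using simple_closed_walk_inj_cell[OF assms] unfolding inj_on_def by auto

lemma simple_closed_walk_inj_b:
  assumes r: "(a, b) \<in> simple_closed_walks d i n S"
  shows "inj_on b {..<i}"
proof (rule inj_onI)
  fix j l assume jl: "j \<in> {..<i}" "l \<in> {..<i}" "b j = b l"
  then have "cm_cell d (a (Suc j mod i)) = cm_cell d (a (Suc l mod i))"
    using simple_closed_walksD(3)[OF r] by (metis lessThan_iff)
  then have "Suc j mod i = Suc l mod i"
    using simple_closed_walk_inj_cell[OF r] Suc_mod_less jl by (metis lessThan_iff)
  then show "j = l"
    using Suc_mod_inj jl by simp
qed

lemma Union_walk_pairs: "\<Union>(walk_pairs i a b) = a ` {..<i} \<union> b ` {..<i}"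
  unfolding walk_pairs_def by blast

lemma card_doubleton_Int_eq_1_iff:
  assumes "x \<noteq> y"
  shows "card ({x, y} \<inter> S) = 1 \<longleftrightarrow> (x \<in> S \<longleftrightarrow> y \<notin> S)"
  using assms by (cases "x \<in> S"; cases "y \<in> S") (simp_all add: Int_insert_left)

lemma walk_pairs_crossing_pairs:
  assumes r: "(a, b) \<in> simple_closed_walks d i n S"
  shows "crossing_pairs (cm_points d n) S (walk_pairs i a b)"
  unfolding crossing_pairs_def pairwise_def disjnt_def
proof (intro conjI ballI impI)
  fix e assume "e \<in> walk_pairs i a b"
  then obtain j where j: "j < i" "e = {a j, b j}"
    unfolding walk_pairs_def by blast
  then show "card e = 2" "e \<subseteq> cm_points d n" "card (e \<inter> S) = 1"
    using simple_closed_walk_a_neq_b[OF r j(1) j(1)] simple_closed_walksD(1,2,5)[OF r j(1)]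
      card_doubleton_Int_eq_1_iff[of "a j" "b j" S] by simp_all
next
  fix e e' assume "e \<in> walk_pairs i a b" "e' \<in> walk_pairs i a b" "e \<noteq> e'"
  then obtain j l where "j < i" "l < i" "j \<noteq> l" "e = {a j, b j}" "e' = {a l, b l}"
    unfolding walk_pairs_def by blast
  then show "e \<inter> e' = {}"
    using simple_closed_walk_a_neq_b[OF r] simple_closed_walk_inj_a[OF r]
      simple_closed_walk_inj_b[OF r] unfolding inj_on_def by auto
qed

lemma walk_pairs_crossing_cycle:
  assumes r: "(a, b) \<in> simple_closed_walks d i n S"
  shows "walk_pairs i a b \<in> crossing_cycles d i n S"
proof -
  have "inj_on (\<lambda>j. {a j, b j}) {..<i}"
    using simple_closed_walk_a_neq_b[OF r] simple_closed_walk_inj_a[OF r]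
    unfolding inj_on_def by (metis doubleton_eq_iff lessThan_iff)
  then have "is_cycle d i (walk_pairs i a b)"
    using r simple_closed_walksD(3)[OF r] unfolding is_cycle_def walk_pairs_def
    by (intro exI[of _ "\<lambda>j. cm_cell d (a j)"] exI[of _ "\<lambda>j. {a j, b j}"])
      (auto simp: simple_closed_walks_def bij_betw_def)
  then show ?thesis
    unfolding crossing_cycles_def using walk_pairs_crossing_pairs[OF r] by blast
qed

lemma doubleton_image_cases:
  assumes "card e = 2" "f ` e = {v, w}"
  obtains x y where "e = {x, y}" "x \<noteq> y" "f x = v" "f y = w"
proof -
  obtain x y where e: "e = {x, y}" "x \<noteq> y"
    using assms(1) by (meson card_2_iff)
  then have "{f x, f y} = {v, w}"
    using assms(2) by simp
  then consider "f x = v" "f y = w" | "f y = v" "f x = w"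
    by (metis doubleton_eq_iff)
  then show ?thesis
  proof cases
    case 1
    then show ?thesis using that e by blast
  next
    case 2
    then show ?thesis using that[of y x] e by (simp add: insert_commute)
  qed
qed

lemma cycle_enumeration:
  assumes pairs: "crossing_pairs X S C" and "is_cycle d i C"
  obtains a b where "inj_on (\<lambda>j. cm_cell d (a j)) {..<i}" "bij_betw (\<lambda>j. {a j, b j}) {..<i} C"
    "\<And>j. j < i \<Longrightarrow> a j \<noteq> b j \<and> cm_cell d (b j) = cm_cell d (a (Suc j mod i))"
    "a \<in> extensional {..<i}" "b \<in> extensional {..<i}"
proof -
  obtain v e where v: "inj_on v {..<i}" and e: "bij_betw e {..<i} C"
    and cells: "\<And>j. j < i \<Longrightarrow> cm_cell d ` e j = {v j, v (Suc j mod i)}"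
    using \<open>is_cycle d i C\<close> unfolding is_cycle_def by auto
  have "\<exists>x y. e j = {x, y} \<and> x \<noteq> y \<and> cm_cell d x = v j \<and> cm_cell d y = v (Suc j mod i)"
    if "j < i" for j
  proof -
    have "e j \<in> C"
      using e that by (auto simp: bij_betw_def)
    then have "card (e j) = 2"
      using pairs unfolding crossing_pairs_def by blast
    from doubleton_image_cases[OF this cells[OF that]] show ?thesis
      by blast
  qed
  then obtain a b where ab: "\<And>j. j < i \<Longrightarrow> e j = {a j, b j} \<and> a j \<noteq> b j \<and>
      cm_cell d (a j) = v j \<and> cm_cell d (b j) = v (Suc j mod i)"
    by metis
  have "inj_on (\<lambda>j. cm_cell d (restrict a {..<i} j)) {..<i}"
    using v ab unfolding inj_on_def by simp
  moreover have "bij_betw e {..<i} C = bij_betw (\<lambda>j. {restrict a {..<i} j, restrict b {..<i} j}) {..<i} C"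
    using ab by (intro bij_betw_cong) simp
  then have "bij_betw (\<lambda>j. {restrict a {..<i} j, restrict b {..<i} j}) {..<i} C"
    using e by blast
  moreover have "restrict a {..<i} j \<noteq> restrict b {..<i} j \<and>
      cm_cell d (restrict b {..<i} j) = cm_cell d (restrict a {..<i} (Suc j mod i))" if "j < i" for j
    using ab[OF that] ab[of "Suc j mod i"] that by simp
  ultimately show ?thesis
    by (rule that[of "restrict a {..<i}" "restrict b {..<i}"]) simp_all
qed

lemma crossing_cycle_simple_walk:
  assumes "C \<in> crossing_cycles d i n S"
  obtains a b where "(a, b) \<in> simple_closed_walks d i n S" "walk_pairs i a b = C"
proof -
  have pairs: "crossing_pairs (cm_points d n) S C" and "is_cycle d i C"
    using assms unfolding crossing_cycles_def by auto
  obtain a b where inj: "inj_on (\<lambda>j. cm_cell d (a j)) {..<i}"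
    and bij: "bij_betw (\<lambda>j. {a j, b j}) {..<i} C"
    and step: "\<And>j. j < i \<Longrightarrow> a j \<noteq> b j \<and> cm_cell d (b j) = cm_cell d (a (Suc j mod i))"
    and ext: "a \<in> extensional {..<i}" "b \<in> extensional {..<i}"
    using cycle_enumeration[OF pairs \<open>is_cycle d i C\<close>] by blast
  have C: "{a j, b j} \<in> C" if "j < i" for j
    using bij that by (auto simp: bij_betw_def)
  have "b j \<noteq> a (Suc j mod i)" if j: "j < i" for j
  proof (cases "Suc j mod i = j")
    case False
    then have "{a j, b j} \<noteq> {a (Suc j mod i), b (Suc j mod i)}"
      using bij j Suc_mod_less[OF j] unfolding bij_betw_def inj_on_def by blast
    then show ?thesis
      using crossing_pairs_disjoint[OF pairs C[OF j] C[OF Suc_mod_less[OF j]]] by blast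
  qed (use step[OF j] in force)
  moreover have "a j \<in> cm_points d n \<and> b j \<in> cm_points d n \<and> (a j \<in> S \<longleftrightarrow> b j \<notin> S)"
    if "j < i" for j
    using pairs C[OF that] step[OF that] card_doubleton_Int_eq_1_iff[of "a j" "b j" S]
    unfolding crossing_pairs_def by auto
  ultimately have "(a, b) \<in> simple_closed_walks d i n S"
    using inj step ext unfolding simple_closed_walks_def closed_walks_def by (auto simp: PiE_iff)
  moreover have "walk_pairs i a b = C"
    using bij unfolding walk_pairs_def bij_betw_def by simp
  ultimately show ?thesis
    using that by blast
qed

lemma simple_closed_walk_partner_eq:
  assumes r1: "(a1, b1) \<in> simple_closed_walks d i n S" and r2: "(a2, b2) \<in> simple_closed_walks d i n S"
    and C: "walk_pairs i a1 b1 = walk_pairs i a2 b2" and j: "j < i" and eq: "a1 j = a2 j"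
  shows "b1 j = b2 j"
proof -
  have "{a1 j, b1 j} \<in> walk_pairs i a2 b2"
    using C j unfolding walk_pairs_def by auto
  then obtain l where l: "l < i" "{a1 j, b1 j} = {a2 l, b2 l}"
    unfolding walk_pairs_def by auto
  have "a2 j = a2 l"
    using l(2) eq simple_closed_walk_a_neq_b[OF r2 j l(1)] by (metis doubleton_eq_iff)
  then have "j = l"
    using simple_closed_walk_inj_a[OF r2] j l(1) unfolding inj_on_def by simp
  then show ?thesis
    using l(2) eq simple_closed_walk_a_neq_b[OF r1 j j] by (metis doubleton_eq_iff)
qed

lemma simple_closed_walk_next_eq:
  assumes r1: "(a1, b1) \<in> simple_closed_walks d i n S" and r2: "(a2, b2) \<in> simple_closed_walks d i n S"
    and C: "walk_pairs i a1 b1 = walk_pairs i a2 b2" and j: "Suc j < i" and eq: "b1 j = b2 j"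
  shows "a1 (Suc j) = a2 (Suc j)"
proof -
  have jj: "j < i" and sm: "Suc j mod i = Suc j"
    using j by simp_all
  have cell: "cm_cell d (a1 (Suc j)) = cm_cell d (a2 (Suc j))"
    using simple_closed_walksD(3)[OF r1 jj] simple_closed_walksD(3)[OF r2 jj] eq sm by simp
  have "a1 (Suc j) \<in> a2 ` {..<i} \<union> b2 ` {..<i}"
    using C j Union_walk_pairs by (metis UnI1 image_eqI lessThan_iff)
  then show ?thesis
  proof
    assume "a1 (Suc j) \<in> a2 ` {..<i}"
    then obtain l where l: "l < i" "a1 (Suc j) = a2 l" by auto
    then have "l = Suc j"
      using simple_closed_walk_inj_cell[OF r2 l(1) j] cell by simp
    then show ?thesis using l by simp
  next
    assume "a1 (Suc j) \<in> b2 ` {..<i}"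
    then obtain l where l: "l < i" "a1 (Suc j) = b2 l" by auto
    have "cm_cell d (a2 (Suc l mod i)) = cm_cell d (a2 (Suc j))"
      using simple_closed_walksD(3)[OF r2 l(1)] l(2) cell by simp
    then have "Suc l mod i = Suc j mod i"
      using simple_closed_walk_inj_cell[OF r2 _ j] Suc_mod_less[OF l(1)] sm by simp
    then have "l = j"
      using Suc_mod_inj[OF l(1) jj] by simp
    then show ?thesis
      using l eq simple_closed_walksD(4)[OF r1 jj] sm by simp
  qed
qed

lemma simple_closed_walk_eq:
  assumes r1: "(a1, b1) \<in> simple_closed_walks d i n S" and r2: "(a2, b2) \<in> simple_closed_walks d i n S"
    and C: "walk_pairs i a1 b1 = walk_pairs i a2 b2" and start: "a1 0 = a2 0"
  shows "(a1, b1) = (a2, b2)"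
proof -
  have a: "a1 j = a2 j" if "j < i" for j
    using that
  proof (induction j)
    case (Suc j)
    then show ?case
      using simple_closed_walk_partner_eq[OF r1 r2 C] simple_closed_walk_next_eq[OF r1 r2 C] by simp
  qed (use start in simp)
  then have "b1 j = b2 j" if "j < i" for j
    using simple_closed_walk_partner_eq[OF r1 r2 C] that by simp
  with a r1 r2 show ?thesis
    unfolding simple_closed_walks_def closed_walks_def by (auto intro: PiE_ext)
qed

lemma simple_closed_walksI:
  assumes "a \<in> extensional {..<i}" "b \<in> extensional {..<i}"
    "inj_on (\<lambda>j. cm_cell d (a j)) {..<i}"
    "\<And>j. j < i \<Longrightarrow> a j \<in> cm_points d n \<and> b j \<in> cm_points d n \<and>
       cm_cell d (b j) = cm_cell d (a (Suc j mod i)) \<and> b j \<noteq> a (Suc j mod i) \<and> (a j \<in> S \<longleftrightarrow> b j \<notin> S)"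
  shows "(a, b) \<in> simple_closed_walks d i n S"
  using assms unfolding simple_closed_walks_def closed_walks_def by (auto simp: PiE_iff)

lemma rotate_mod_image:
  fixes t i :: nat
  assumes "t < i"
  shows "(\<lambda>j. (j + t) mod i) ` {..<i} = {..<i}"
proof (intro equalityI subsetI)
  fix x assume "x \<in> (\<lambda>j. (j + t) mod i) ` {..<i}"
  then show "x \<in> {..<i}"
    using assms by auto
next
  fix l assume l: "l \<in> {..<i}"
  have "((l + i - t) mod i + t) mod i = (l + i - t + t) mod i"
    by (simp add: mod_add_left_eq)
  also have "\<dots> = l"
    using assms l by simp
  finally show "l \<in> (\<lambda>j. (j + t) mod i) ` {..<i}"
    using assms by (intro image_eqI[where x = "(l + i - t) mod i"]) auto
qed

lemma inj_on_rotate_mod: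
  fixes t i :: nat
  assumes "t < i"
  shows "inj_on (\<lambda>j. (j + t) mod i) {..<i}"
  using rotate_mod_image[OF assms] by (intro finite_surj_inj) auto

lemma reverse_image:
  fixes i :: nat
  assumes "0 < i"
  shows "(\<lambda>j. i - 1 - j) ` {..<i} = {..<i}"
proof (intro equalityI subsetI)
  fix x assume "x \<in> {..<i}"
  then show "x \<in> (\<lambda>j. i - 1 - j) ` {..<i}"
    by (intro image_eqI[where x = "i - 1 - x"]) auto
qed (use assms in auto)

lemma simple_closed_walk_rotate:
  assumes r: "(a, b) \<in> simple_closed_walks d i n S" and t: "t < i"
  defines "a' \<equiv> (\<lambda>j\<in>{..<i}. a ((j + t) mod i))" and "b' \<equiv> (\<lambda>j\<in>{..<i}. b ((j + t) mod i))"
  shows "(a', b') \<in> simple_closed_walks d i n S" "walk_pairs i a' b' = walk_pairs i a b"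
    "a' 0 = a t"
proof -
  have ml: "(j + t) mod i < i" for j
    using t by simp
  have sh: "Suc ((j + t) mod i) mod i = (Suc j mod i + t) mod i" for j
    by (simp add: mod_Suc_eq mod_add_left_eq)
  have "inj_on (\<lambda>j. cm_cell d (a' j)) {..<i}"
  proof (rule inj_onI)
    fix j l assume jl: "j \<in> {..<i}" "l \<in> {..<i}" "cm_cell d (a' j) = cm_cell d (a' l)"
    then have "(j + t) mod i = (l + t) mod i"
      using simple_closed_walk_inj_cell[OF r ml ml] unfolding a'_def by simp
    then show "j = l"
      using inj_on_rotate_mod[OF t] jl unfolding inj_on_def by blast
  qed
  moreover have "a' (Suc j mod i) = a (Suc ((j + t) mod i) mod i)" "b' j = b ((j + t) mod i)"
    "a' j = a ((j + t) mod i)" if "j < i" for j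
    unfolding a'_def b'_def using that sh by auto
  ultimately show "(a', b') \<in> simple_closed_walks d i n S"
    using simple_closed_walksD[OF r ml] unfolding a'_def b'_def
    by (intro simple_closed_walksI) auto
  have "walk_pairs i a' b' = (\<lambda>j. {a j, b j}) ` ((\<lambda>j. (j + t) mod i) ` {..<i})"
    unfolding walk_pairs_def a'_def b'_def image_image by (intro image_cong) auto
  then show "walk_pairs i a' b' = walk_pairs i a b"
    unfolding rotate_mod_image[OF t] walk_pairs_def .
  show "a' 0 = a t"
    unfolding a'_def using t by simp
qed

lemma simple_closed_walk_reverse:
  assumes r: "(a, b) \<in> simple_closed_walks d i n S" and i: "0 < i"
  defines "a' \<equiv> (\<lambda>j\<in>{..<i}. b (i - 1 - j))" and "b' \<equiv> (\<lambda>j\<in>{..<i}. a (i - 1 - j))"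
  shows "(a', b') \<in> simple_closed_walks d i n S" "walk_pairs i a' b' = walk_pairs i a b"
    "\<And>t. t < i \<Longrightarrow> a' (i - 1 - t) = b t"
proof -
  have ml: "i - 1 - j < i" for j
    using i by simp
  have key: "Suc (i - 1 - Suc j mod i) mod i = i - 1 - j" if "j < i" for j
    using that by (cases "Suc j = i") simp_all
  have "inj_on (\<lambda>j. cm_cell d (a' j)) {..<i}"
  proof (rule inj_onI)
    fix j l assume jl: "j \<in> {..<i}" "l \<in> {..<i}" "cm_cell d (a' j) = cm_cell d (a' l)"
    then have "cm_cell d (a (Suc (i - 1 - j) mod i)) = cm_cell d (a (Suc (i - 1 - l) mod i))"
      using simple_closed_walksD(3)[OF r ml] unfolding a'_def by simp
    then have "Suc (i - 1 - j) mod i = Suc (i - 1 - l) mod i"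
      using simple_closed_walk_inj_cell[OF r] Suc_mod_less[OF ml] by blast
    then have "i - 1 - j = i - 1 - l"
      using Suc_mod_inj[OF ml ml] by blast
    then show "j = l"
      using jl by simp
  qed
  moreover have "cm_cell d (b' j) = cm_cell d (a' (Suc j mod i)) \<and> b' j \<noteq> a' (Suc j mod i)"
    if j: "j < i" for j
  proof -
    have "a' (Suc j mod i) = b (i - 1 - Suc j mod i)" "b' j = a (i - 1 - j)"
      unfolding a'_def b'_def using j by auto
    then show ?thesis
      using simple_closed_walksD(3)[OF r ml[of "Suc j mod i"]] key[OF j]
        simple_closed_walk_a_neq_b[OF r ml ml] by auto
  qed
  ultimately show "(a', b') \<in> simple_closed_walks d i n S"
    using simple_closed_walksD(1,2,5)[OF r ml] unfolding a'_def b'_def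
    by (intro simple_closed_walksI) auto
  have "walk_pairs i a' b' = (\<lambda>j. {a j, b j}) ` ((\<lambda>j. i - 1 - j) ` {..<i})"
    unfolding walk_pairs_def a'_def b'_def image_image by (intro image_cong) auto
  then show "walk_pairs i a' b' = walk_pairs i a b"
    unfolding reverse_image[OF i] walk_pairs_def .
  show "\<And>t. t < i \<Longrightarrow> a' (i - 1 - t) = b t"
    unfolding a'_def by simp
qed

lemma simple_closed_walk_start:
  assumes r: "(a, b) \<in> simple_closed_walks d i n S" and x: "x \<in> a ` {..<i} \<union> b ` {..<i}"
  obtains a' b' where "(a', b') \<in> simple_closed_walks d i n S"
    "walk_pairs i a' b' = walk_pairs i a b" "a' 0 = x"
proof -
  from x consider t where "t < i" "x = a t" | t where "t < i" "x = b t"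
    by blast
  then show ?thesis
  proof cases
    case (1 t)
    then show ?thesis
      using simple_closed_walk_rotate[OF r \<open>t < i\<close>] that by blast
  next
    case (2 t)
    then have "0 < i" "i - 1 - t < i"
      by auto
    from simple_closed_walk_reverse[OF r \<open>0 < i\<close>] 2 obtain a1 b1
      where "(a1, b1) \<in> simple_closed_walks d i n S" "walk_pairs i a1 b1 = walk_pairs i a b"
        "a1 (i - 1 - t) = x"
      by blast
    then show ?thesis
      using simple_closed_walk_rotate[of a1 b1 d i n S "i - 1 - t"] \<open>i - 1 - t < i\<close> that by auto
  qed
qed

lemma card_simple_closed_walks_same_pairs:
  assumes i: "0 < i" and r0: "(a0, b0) \<in> simple_closed_walks d i n S"
  shows "card {r \<in> simple_closed_walks d i n S. walk_pairs i (fst r) (snd r) = walk_pairs i a0 b0} = 2 * i"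
proof -
  let ?F = "{r \<in> simple_closed_walks d i n S. walk_pairs i (fst r) (snd r) = walk_pairs i a0 b0}"
  let ?U = "a0 ` {..<i} \<union> b0 ` {..<i}"
  have inj: "inj_on (\<lambda>r. fst r 0) ?F"
  proof (rule inj_onI)
    fix r1 r2 assume "r1 \<in> ?F" "r2 \<in> ?F" "fst r1 0 = fst r2 0"
    then show "r1 = r2"
      using simple_closed_walk_eq[of "fst r1" "snd r1" d i n S "fst r2" "snd r2"] by simp
  qed
  have image: "(\<lambda>r. fst r 0) ` ?F = ?U"
  proof (intro equalityI subsetI)
    fix x assume "x \<in> (\<lambda>r. fst r 0) ` ?F"
    then obtain a b where "walk_pairs i a b = walk_pairs i a0 b0" "x = a 0"
      by auto
    then show "x \<in> ?U"
      using i Union_walk_pairs by (metis UnI1 image_eqI lessThan_iff)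
  next
    fix x assume "x \<in> ?U"
    then obtain a' b' where
      "(a', b') \<in> simple_closed_walks d i n S" "walk_pairs i a' b' = walk_pairs i a0 b0" "a' 0 = x"
      using simple_closed_walk_start[OF r0] by blast
    then show "x \<in> (\<lambda>r. fst r 0) ` ?F"
      by (intro image_eqI[where x = "(a', b')"]) auto
  qed
  have "card ?F = card ?U"
    using card_image[OF inj] unfolding image ..
  also have "\<dots> = card (a0 ` {..<i}) + card (b0 ` {..<i})"
    using simple_closed_walk_a_neq_b[OF r0] by (intro card_Un_disjoint) auto
  also have "\<dots> = 2 * i"
    using simple_closed_walk_inj_a[OF r0] simple_closed_walk_inj_b[OF r0] by (simp add: card_image)
  finally show ?thesis .
qed

lemma card_simple_closed_walks:
  assumes i: "0 < i"
  shows "card (simple_closed_walks d i n S) = 2 * i * card (crossing_cycles d i n S)"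
proof -
  have "card (simple_closed_walks d i n S) = (\<Sum>C\<in>crossing_cycles d i n S.
      card {r \<in> simple_closed_walks d i n S. walk_pairs i (fst r) (snd r) = C})"
  proof -
    have "(\<Sum>C\<in>crossing_cycles d i n S.
        \<Sum>r\<in>{r \<in> simple_closed_walks d i n S. walk_pairs i (fst r) (snd r) = C}. 1 :: nat) =
        (\<Sum>r\<in>simple_closed_walks d i n S. 1)"
      using finite_simple_closed_walks finite_crossing_cycles walk_pairs_crossing_cycle
      by (intro sum.group) auto
    then show ?thesis
      by simp
  qed
  also have "\<dots> = (\<Sum>C\<in>crossing_cycles d i n S. 2 * i)"
  proof (rule sum.cong[OF refl])
    fix C assume "C \<in> crossing_cycles d i n S"
    then obtain a b where "(a, b) \<in> simple_closed_walks d i n S" "walk_pairs i a b = C"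
      by (rule crossing_cycle_simple_walk)
    then show "card {r \<in> simple_closed_walks d i n S. walk_pairs i (fst r) (snd r) = C} = 2 * i"
      using card_simple_closed_walks_same_pairs[OF i] by blast
  qed
  finally show ?thesis
    by simp
qed

lemma cm_cell_less: "x \<in> cm_points d n \<Longrightarrow> cm_cell d x < n"
  unfolding cm_points_def cm_cell_def by (simp add: less_mult_imp_div_less mult.commute)

lemma div_eq_iff_bounds: "0 < (d::nat) \<Longrightarrow> x div d = v \<longleftrightarrow> d * v \<le> x \<and> x < d * v + d"
  by (metis add.commute div_nat_eqI dividend_less_times_div mult_Suc_right times_div_less_eq_dividend)

lemma cell_points_eq:
  assumes "0 < d" "v < n"
  shows "{x \<in> cm_points d n. cm_cell d x = v} = {d * v..<d * v + d}"
proof -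
  have "d * v + d \<le> d * n"
    using assms by (metis Suc_leI mult_Suc_right mult_le_mono2 add.commute)
  then show ?thesis
    unfolding cm_points_def cm_cell_def using div_eq_iff_bounds[OF assms(1)] by auto
qed

lemma card_cell_points: "0 < d \<Longrightarrow> v < n \<Longrightarrow> card {x \<in> cm_points d n. cm_cell d x = v} = d"
  using cell_points_eq by simp

definition in_count :: "nat \<Rightarrow> nat \<Rightarrow> nat set \<Rightarrow> nat \<Rightarrow> nat" where
  "in_count d n S v = card {x \<in> cm_points d n. cm_cell d x = v \<and> x \<in> S}"

definition cell_side :: "nat \<Rightarrow> nat \<Rightarrow> nat set \<Rightarrow> nat \<Rightarrow> bool \<Rightarrow> nat set" where
  "cell_side d n S v t = {x \<in> cm_points d n. cm_cell d x = v \<and> (x \<in> S \<longleftrightarrow> t)}"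

lemma card_cell_side:
  assumes "0 < d" "v < n"
  shows "card (cell_side d n S v t) = (if t then in_count d n S v else d - in_count d n S v)"
proof (cases t)
  case True
  then show ?thesis unfolding cell_side_def in_count_def by simp
next
  case False
  have "cell_side d n S v t = {x \<in> cm_points d n. cm_cell d x = v} - {x \<in> cm_points d n. cm_cell d x = v \<and> x \<in> S}"
    unfolding cell_side_def using False by blast
  moreover have "card ({x \<in> cm_points d n. cm_cell d x = v} - {x \<in> cm_points d n. cm_cell d x = v \<and> x \<in> S})
     = card {x \<in> cm_points d n. cm_cell d x = v} - card {x \<in> cm_points d n. cm_cell d x = v \<and> x \<in> S}"
    by (rule card_Diff_subset) (auto simp: cm_points_def)
  ultimately show ?thesis using card_cell_points[OF assms] False unfolding in_count_def by simp
qed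

lemma finite_cell_side: "finite (cell_side d n S v t)"
  unfolding cell_side_def cm_points_def by simp

lemma sum_in_count:
  assumes "S \<subseteq> cm_points d n"
  shows "(\<Sum>v<n. in_count d n S v) = card S"
proof -
  have eq: "S = (\<Union>v<n. {x \<in> cm_points d n. cm_cell d x = v \<and> x \<in> S})"
    using assms cm_cell_less by blast
  have "card S = card (\<Union>v<n. {x \<in> cm_points d n. cm_cell d x = v \<and> x \<in> S})"
    by (rule arg_cong[OF eq])
  also have "\<dots> = (\<Sum>v<n. card {x \<in> cm_points d n. cm_cell d x = v \<and> x \<in> S})"
  proof (rule card_UN_disjoint)
    show "finite {..<n}" by simp
    show "\<forall>v\<in>{..<n}. finite {x \<in> cm_points d n. cm_cell d x = v \<and> x \<in> S}"
      by (simp add: cm_points_def)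
    show "\<forall>v\<in>{..<n}. \<forall>w\<in>{..<n}. v \<noteq> w \<longrightarrow>
       {x \<in> cm_points d n. cm_cell d x = v \<and> x \<in> S} \<inter> {x \<in> cm_points d n. cm_cell d x = w \<and> x \<in> S} = {}"
      by blast
  qed
  also have "\<dots> = (\<Sum>v<n. in_count d n S v)" unfolding in_count_def ..
  finally show ?thesis by simp
qed

lemma in_count_le:
  assumes "0 < d" "v < n" shows "in_count d n S v \<le> d"
proof -
  have "card {x \<in> cm_points d n. cm_cell d x = v \<and> x \<in> S} \<le> card {x \<in> cm_points d n. cm_cell d x = v}"
    by (rule card_mono) (auto simp: cm_points_def)
  then show ?thesis unfolding in_count_def using card_cell_points[OF assms] by simp
qed

lemma in_count_cases:
  assumes d: "0 < d" and S: "S \<in> in_point_sets d p n" and v: "v < n"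
  shows "in_count d n S v = p \<or> in_count d n S v = d - p"
proof -
  have "card {x\<in>cm_points d n. cm_cell d x = v \<and> x \<in> S} = p \<or>
        card {x\<in>cm_points d n. cm_cell d x = v \<and> x \<notin> S} = p" using S v unfolding in_point_sets_def by blast
  moreover have "{x\<in>cm_points d n. cm_cell d x = v \<and> x \<notin> S} = cell_side d n S v False" unfolding cell_side_def by simp
  ultimately have "in_count d n S v = p \<or> d - in_count d n S v = p" using card_cell_side[OF d v, of S False] unfolding in_count_def by simp
  then show ?thesis using in_count_le[OF d v, of S] by auto
qed

lemma sum_two_valued:
  fixes f :: "nat \<Rightarrow> 'a :: comm_semiring_1"
  assumes "\<And>v. v < n \<Longrightarrow> g v = a \<or> g v = b"
  shows "(\<Sum>v<n. f (g v)) =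
    of_nat (card {v. v < n \<and> g v = a}) * f a + of_nat (n - card {v. v < n \<and> g v = a}) * f b"
proof -
  let ?A = "{v. v < n \<and> g v = a}"
  have "(\<Sum>v<n. f (g v)) = (\<Sum>v\<in>?A. f (g v)) + (\<Sum>v\<in>{..<n} - ?A. f (g v))"
    by (subst sum.subset_diff[of ?A]) (auto simp: add.commute)
  also have "\<dots> = (\<Sum>v\<in>?A. f a) + (\<Sum>v\<in>{..<n} - ?A. f b)"
    using assms by (intro arg_cong2[where f = "(+)"] sum.cong) auto
  also have "\<dots> = of_nat (card ?A) * f a + of_nat (card ({..<n} - ?A)) * f b"
    by simp
  also have "card ({..<n} - ?A) = n - card ?A"
    by (subst card_Diff_subset) auto
  finally show ?thesis .
qed

lemma card_cells_in_count_eq: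
  assumes d: "2 * p < d" and S: "S \<in> balanced_in_point_sets d p m"
  shows "card {v. v < 2 * m \<and> in_count d (2 * m) S v = p} = m"
proof -
  let ?c = "card {v. v < 2 * m \<and> in_count d (2 * m) S v = p}"
  have SV: "S \<in> in_point_sets d p (2 * m)" and "card S = d * m"
    using S unfolding balanced_in_point_sets_def by auto
  then have "d * m = ?c * p + (2 * m - ?c) * (d - p)"
    using sum_in_count[of S d "2 * m"] in_count_cases[of d S p "2 * m"] d
      sum_two_valued[of "2 * m" "in_count d (2 * m) S" p "d - p" id]
    unfolding in_point_sets_def by auto
  moreover have "?c \<le> 2 * m"
    using card_mono[of "{..<2 * m}" "{v. v < 2 * m \<and> in_count d (2 * m) S v = p}"] by auto
  ultimately have "int (d * m) = int ?c * int p + (2 * int m - int ?c) * (int d - int p)"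
    using d by (simp add: of_nat_diff)
  then have "(int ?c - int m) * (2 * int p - int d) = 0"
    by (simp add: algebra_simps)
  then show ?thesis
    using d by simp
qed

lemma sum_in_count_balanced:
  fixes f :: "nat \<Rightarrow> 'a :: comm_semiring_1"
  assumes d: "2 * p < d" and S: "S \<in> balanced_in_point_sets d p m"
  shows "(\<Sum>v<2 * m. f (in_count d (2 * m) S v)) = of_nat m * (f p + f (d - p))"
proof -
  have "S \<in> in_point_sets d p (2 * m)"
    using S unfolding balanced_in_point_sets_def by auto
  then show ?thesis
    using sum_two_valued[of "2 * m" "in_count d (2 * m) S" p "d - p" f] in_count_cases[of d S p "2 * m"]
      card_cells_in_count_eq[OF assms] d
    by (simp add: algebra_simps)
qed

text \<open>Ordered pairs of distinct points in a common cell, the first on side \<open>t\<close> and the second on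
  side \<open>t'\<close> of \<open>S\<close>; they are the moves a closed walk makes inside the cells it visits.\<close>

definition cell_steps :: "nat \<Rightarrow> nat \<Rightarrow> nat set \<Rightarrow> bool \<Rightarrow> bool \<Rightarrow> (nat \<times> nat) set" where
  "cell_steps d n S t t' = {(x, y). x \<in> cm_points d n \<and> y \<in> cm_points d n \<and>
      cm_cell d x = cm_cell d y \<and> x \<noteq> y \<and> (x \<in> S \<longleftrightarrow> t) \<and> (y \<in> S \<longleftrightarrow> t')}"

definition step_count :: "nat \<Rightarrow> bool \<Rightarrow> bool \<Rightarrow> nat \<Rightarrow> nat" where
  "step_count d t t' h =
     (if t then h else d - h) * ((if t' then h else d - h) - (if t = t' then 1 else 0))"

lemma card_cell_steps_in_cell:
  assumes "0 < d" "v < n"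
  shows "card {(x,y). x \<in> cell_side d n S v t \<and> y \<in> cell_side d n S v t' \<and> x \<noteq> y} = step_count d t t' (in_count d n S v)"
proof -
  let ?X = "cell_side d n S v t" and ?Y = "cell_side d n S v t'"
  have eq: "{(x,y). x \<in> ?X \<and> y \<in> ?Y \<and> x \<noteq> y} = (?X \<times> ?Y) - (\<lambda>x. (x,x)) ` (?X \<inter> ?Y)" by auto
  have "card ((?X \<times> ?Y) - (\<lambda>x. (x,x)) ` (?X \<inter> ?Y)) = card (?X \<times> ?Y) - card ((\<lambda>x. (x,x)) ` (?X \<inter> ?Y))"
    by (rule card_Diff_subset) (auto simp: finite_cell_side)
  also have "\<dots> = card ?X * card ?Y - card (?X \<inter> ?Y)"
    by (simp add: card_cartesian_product card_image inj_on_def)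
  also have "card (?X \<inter> ?Y) = (if t = t' then card ?X else 0)"
  proof (cases "t = t'")
    case True then show ?thesis by simp
  next
    case False
    then have "?X \<inter> ?Y = {}" unfolding cell_side_def by blast
    then show ?thesis using False by simp
  qed
  finally show ?thesis
    unfolding eq step_count_def using card_cell_side[OF assms] by (simp add: diff_mult_distrib2)
qed

lemma card_cell_steps:
  assumes "0 < d"
  shows "card (cell_steps d n S t t') = (\<Sum>v<n. step_count d t t' (in_count d n S v))"
proof -
  have eq: "cell_steps d n S t t' = (\<Union>v<n. {(x,y). x \<in> cell_side d n S v t \<and> y \<in> cell_side d n S v t' \<and> x \<noteq> y})"
  proof (intro equalityI subsetI)
    fix z assume z: "z \<in> cell_steps d n S t t'"
    obtain x y where xy: "z = (x,y)" by fastforce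
    have "x < d * n" using z xy unfolding cell_steps_def cm_points_def by auto
    then have "cm_cell d x < n" unfolding cm_cell_def by (simp add: less_mult_imp_div_less mult.commute)
    then show "z \<in> (\<Union>v<n. {(x,y). x \<in> cell_side d n S v t \<and> y \<in> cell_side d n S v t' \<and> x \<noteq> y})"
      using z xy unfolding cell_steps_def cell_side_def by auto
  next
    fix z assume "z \<in> (\<Union>v<n. {(x,y). x \<in> cell_side d n S v t \<and> y \<in> cell_side d n S v t' \<and> x \<noteq> y})"
    then show "z \<in> cell_steps d n S t t'" unfolding cell_steps_def cell_side_def by auto
  qed
  have "card (cell_steps d n S t t') = card (\<Union>v<n. {(x,y). x \<in> cell_side d n S v t \<and> y \<in> cell_side d n S v t' \<and> x \<noteq> y})"
    by (rule arg_cong[OF eq])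
  also have "\<dots> = (\<Sum>v<n. card {(x,y). x \<in> cell_side d n S v t \<and> y \<in> cell_side d n S v t' \<and> x \<noteq> y})"
  proof (rule card_UN_disjoint)
    show "\<forall>v\<in>{..<n}. finite {(x,y). x \<in> cell_side d n S v t \<and> y \<in> cell_side d n S v t' \<and> x \<noteq> y}"
    proof
      fix v
      have "{(x,y). x \<in> cell_side d n S v t \<and> y \<in> cell_side d n S v t' \<and> x \<noteq> y} \<subseteq> cell_side d n S v t \<times> cell_side d n S v t'" by auto
      then show "finite {(x,y). x \<in> cell_side d n S v t \<and> y \<in> cell_side d n S v t' \<and> x \<noteq> y}"
        by (rule finite_subset) (simp add: finite_cell_side)
    qed
  qed (auto simp: cell_side_def)
  also have "\<dots> = (\<Sum>v<n. step_count d t t' (in_count d n S v))"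
    using card_cell_steps_in_cell[OF assms] by simp
  finally show ?thesis .
qed

definition cross_steps :: "nat \<Rightarrow> nat \<Rightarrow> nat" where
  "cross_steps d p = 2 * p * (d - p)"

definition same_side_steps :: "nat \<Rightarrow> nat \<Rightarrow> nat" where
  "same_side_steps d p = p * (p - 1) + (d - p) * (d - p - 1)"

lemma card_cell_steps_balanced:
  assumes d: "2 * p < d" and S: "S \<in> balanced_in_point_sets d p m"
  shows "card (cell_steps d (2 * m) S t t') = m * (if t = t' then same_side_steps d p else cross_steps d p)"
proof -
  have "card (cell_steps d (2 * m) S t t') = m * (step_count d t t' p + step_count d t t' (d - p))"
    using card_cell_steps[of d "2 * m" S t t'] sum_in_count_balanced[OF assms, of "step_count d t t'"] d
    by simp
  moreover have "d - (d - p) = p"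
    using d by simp
  ultimately show ?thesis
    unfolding step_count_def cross_steps_def same_side_steps_def
    by (cases t; cases t') (simp_all add: mult_2 mult.commute add.commute)
qed

definition closed_walks_signed ::
    "nat \<Rightarrow> nat \<Rightarrow> nat \<Rightarrow> nat set \<Rightarrow> (nat \<Rightarrow> bool) \<Rightarrow> ((nat \<Rightarrow> nat) \<times> (nat \<Rightarrow> nat)) set" where
  "closed_walks_signed d i n S s = {(a, b) \<in> closed_walks d i n S. \<forall>j<i. a j \<in> S \<longleftrightarrow> s j}"

definition walk_steps :: "nat \<Rightarrow> (nat \<Rightarrow> nat) \<times> (nat \<Rightarrow> nat) \<Rightarrow> nat \<Rightarrow> nat \<times> nat" where
  "walk_steps i w = (\<lambda>j\<in>{..<i}. (snd w j, fst w (Suc j mod i)))"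

definition steps_walk :: "nat \<Rightarrow> (nat \<Rightarrow> nat \<times> nat) \<Rightarrow> (nat \<Rightarrow> nat) \<times> (nat \<Rightarrow> nat)" where
  "steps_walk i w = (\<lambda>j\<in>{..<i}. snd (w ((j + (i - 1)) mod i)), \<lambda>j\<in>{..<i}. fst (w j))"

lemma Suc_mod_pred:
  assumes "j < i"
  shows "Suc ((j + (i - 1)) mod i) mod i = j" "(Suc j mod i + (i - 1)) mod i = j"
proof -
  have i: "Suc (j + (i - 1)) = j + i" using assms by simp
  have "Suc ((j + (i - 1)) mod i) mod i = Suc (j + (i - 1)) mod i" by (rule mod_Suc_eq)
  also have "\<dots> = (j + i) mod i" using i by (simp only:)
  also have "\<dots> = j" using assms by simp
  finally show "Suc ((j + (i - 1)) mod i) mod i = j" .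
  have "(Suc j mod i + (i - 1)) mod i = (Suc j + (i - 1)) mod i" by (simp add: mod_add_left_eq)
  also have "\<dots> = (j + i) mod i" using i by (simp only: plus_nat.simps)
  also have "\<dots> = j" using assms by simp
  finally show "(Suc j mod i + (i - 1)) mod i = j" .
qed

lemma walk_steps_in_PiE:
  assumes "(a, b) \<in> closed_walks_signed d i n S s"
  shows "walk_steps i (a, b) \<in> (\<Pi>\<^sub>E j\<in>{..<i}. cell_steps d n S (\<not> s j) (s (Suc j mod i)))"
proof -
  have walk: "(a, b) \<in> closed_walks d i n S" and sign: "\<And>j. j < i \<Longrightarrow> a j \<in> S \<longleftrightarrow> s j"
    using assms unfolding closed_walks_signed_def by auto
  have "(b j, a (Suc j mod i)) \<in> cell_steps d n S (\<not> s j) (s (Suc j mod i))" if j: "j < i" for j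
    using closed_walksD[OF walk j] closed_walksD(1)[OF walk Suc_mod_less[OF j]] sign[OF j]
      sign[OF Suc_mod_less[OF j]]
    unfolding cell_steps_def by auto
  then show ?thesis
    unfolding walk_steps_def by simp
qed

lemma steps_walk_in_closed_walks_signed:
  assumes i: "0 < i" and w: "w \<in> (\<Pi>\<^sub>E j\<in>{..<i}. cell_steps d n S (\<not> s j) (s (Suc j mod i)))"
  shows "steps_walk i w \<in> closed_walks_signed d i n S s"
proof -
  define a where "a = (\<lambda>j\<in>{..<i}. snd (w ((j + (i - 1)) mod i)))"
  define b where "b = (\<lambda>j\<in>{..<i}. fst (w j))"
  have pred: "(j + (i - 1)) mod i < i" for j
    using i by simp
  have step: "w j \<in> cell_steps d n S (\<not> s j) (s (Suc j mod i))" if "j < i" for j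
    using w that by auto
  have points: "fst (w k) \<in> cm_points d n" "snd (w k) \<in> cm_points d n" if "k < i" for k
    using step[OF that] unfolding cell_steps_def by (cases "w k"; simp)+
  have "cm_cell d (b j) = cm_cell d (a (Suc j mod i)) \<and> b j \<noteq> a (Suc j mod i) \<and>
      (a j \<in> S \<longleftrightarrow> b j \<notin> S) \<and> (a j \<in> S \<longleftrightarrow> s j)" if j: "j < i" for j
  proof -
    have "a (Suc j mod i) = snd (w j)" "a j = snd (w ((j + (i - 1)) mod i))" "b j = fst (w j)"
      unfolding a_def b_def using Suc_mod_pred(2)[OF j] Suc_mod_less[OF j] j by simp_all
    moreover have "w ((j + (i - 1)) mod i) \<in> cell_steps d n S (\<not> s ((j + (i - 1)) mod i)) (s j)"
      using step[OF pred[of j]] Suc_mod_pred(1)[OF j] by simp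
    moreover note step[OF j]
    ultimately show ?thesis
      unfolding cell_steps_def by (auto simp only: mem_Collect_eq case_prod_beta prod.collapse)
  qed
  moreover have "a \<in> {..<i} \<rightarrow>\<^sub>E cm_points d n" "b \<in> {..<i} \<rightarrow>\<^sub>E cm_points d n"
    unfolding a_def b_def using points pred by auto
  ultimately show ?thesis
    unfolding steps_walk_def a_def[symmetric] b_def[symmetric] closed_walks_signed_def closed_walks_def
    by auto
qed

lemma bij_betw_walk_steps:
  assumes i: "0 < i"
  shows "bij_betw (walk_steps i) (closed_walks_signed d i n S s)
           (\<Pi>\<^sub>E j\<in>{..<i}. cell_steps d n S (\<not> s j) (s (Suc j mod i)))"
proof (rule bij_betw_byWitness[where f' = "steps_walk i"])
  have pred: "(j + (i - 1)) mod i < i" for j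
    using i by simp
  show "\<forall>w\<in>closed_walks_signed d i n S s. steps_walk i (walk_steps i w) = w"
  proof
    fix w assume w: "w \<in> closed_walks_signed d i n S s"
    obtain a b where ab: "w = (a, b)" by fastforce
    have ext: "a \<in> extensional {..<i}" "b \<in> extensional {..<i}"
      using w ab unfolding closed_walks_signed_def closed_walks_def by (auto simp: PiE_iff)
    have "(\<lambda>j\<in>{..<i}. snd (walk_steps i (a, b) ((j + (i - 1)) mod i))) = a"
    proof (rule extensionalityI[OF _ ext(1)])
      fix j assume "j \<in> {..<i}"
      then show "(\<lambda>j\<in>{..<i}. snd (walk_steps i (a, b) ((j + (i - 1)) mod i))) j = a j"
        using pred[of j] Suc_mod_pred(1)[of j i] by (simp add: walk_steps_def)
    qed simp
    moreover have "(\<lambda>j\<in>{..<i}. fst (walk_steps i (a, b) j)) = b"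
      by (rule extensionalityI[OF _ ext(2)]) (simp_all add: walk_steps_def)
    ultimately show "steps_walk i (walk_steps i w) = w"
      unfolding ab steps_walk_def by simp
  qed
  show "\<forall>w\<in>\<Pi>\<^sub>E j\<in>{..<i}. cell_steps d n S (\<not> s j) (s (Suc j mod i)). walk_steps i (steps_walk i w) = w"
  proof
    fix w assume "w \<in> (\<Pi>\<^sub>E j\<in>{..<i}. cell_steps d n S (\<not> s j) (s (Suc j mod i)))"
    then have ext: "w \<in> extensional {..<i}"
      by (simp add: PiE_iff)
    show "walk_steps i (steps_walk i w) = w"
    proof (rule extensionalityI[OF _ ext])
      fix j assume "j \<in> {..<i}"
      then show "walk_steps i (steps_walk i w) j = w j"
        using Suc_mod_pred(2)[of j i] Suc_mod_less[of j i] by (simp add: walk_steps_def steps_walk_def)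
    qed (simp add: walk_steps_def)
  qed
  show "walk_steps i ` closed_walks_signed d i n S s \<subseteq>
      (\<Pi>\<^sub>E j\<in>{..<i}. cell_steps d n S (\<not> s j) (s (Suc j mod i)))"
    using walk_steps_in_PiE by fast
  show "steps_walk i ` (\<Pi>\<^sub>E j\<in>{..<i}. cell_steps d n S (\<not> s j) (s (Suc j mod i))) \<subseteq>
      closed_walks_signed d i n S s"
    using steps_walk_in_closed_walks_signed[OF i] by blast
qed

lemma card_closed_walks_signed:
  assumes "0 < i"
  shows "card (closed_walks_signed d i n S s) = (\<Prod>j<i. card (cell_steps d n S (\<not> s j) (s (Suc j mod i))))"
  using bij_betw_same_card[OF bij_betw_walk_steps[OF assms]] by (simp add: card_PiE)

lemma card_closed_walks_sum_signs:
  assumes i: "0 < i"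
  shows "card (closed_walks d i n S) = (\<Sum>s\<in>{..<i} \<rightarrow>\<^sub>E (UNIV :: bool set). \<Prod>j<i. card (cell_steps d n S (\<not> s j) (s (Suc j mod i))))"
proof -
  have eq: "closed_walks d i n S = (\<Union>s\<in>{..<i} \<rightarrow>\<^sub>E (UNIV :: bool set). closed_walks_signed d i n S s)"
  proof (intro equalityI subsetI)
    fix r assume r: "r \<in> closed_walks d i n S"
    obtain a b where ab: "r = (a,b)" by fastforce
    have "r \<in> closed_walks_signed d i n S (\<lambda>j\<in>{..<i}. a j \<in> S)" using r ab unfolding closed_walks_signed_def by auto
    moreover have "(\<lambda>j\<in>{..<i}. a j \<in> S) \<in> {..<i} \<rightarrow>\<^sub>E (UNIV :: bool set)" by simp
    ultimately show "r \<in> (\<Union>s\<in>{..<i} \<rightarrow>\<^sub>E (UNIV :: bool set). closed_walks_signed d i n S s)" by blast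
  qed (auto simp: closed_walks_signed_def)
  have "card (closed_walks d i n S) = card (\<Union>s\<in>{..<i} \<rightarrow>\<^sub>E (UNIV :: bool set). closed_walks_signed d i n S s)"
    by (rule arg_cong[OF eq])
  also have "\<dots> = (\<Sum>s\<in>{..<i} \<rightarrow>\<^sub>E (UNIV :: bool set). card (closed_walks_signed d i n S s))"
  proof (rule card_UN_disjoint)
    show "finite ({..<i} \<rightarrow>\<^sub>E (UNIV :: bool set))" by (simp add: finite_PiE)
    show "\<forall>s\<in>{..<i} \<rightarrow>\<^sub>E UNIV. finite (closed_walks_signed d i n S s)"
      unfolding closed_walks_signed_def by (auto intro: finite_subset[OF _ finite_closed_walks])
    show "\<forall>s\<in>{..<i} \<rightarrow>\<^sub>E UNIV. \<forall>s'\<in>{..<i} \<rightarrow>\<^sub>E UNIV. s \<noteq> s' \<longrightarrow> closed_walks_signed d i n S s \<inter> closed_walks_signed d i n S s' = {}"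
    proof (intro ballI impI)
      fix s s' :: "nat \<Rightarrow> bool" assume s: "s \<in> {..<i} \<rightarrow>\<^sub>E UNIV" "s' \<in> {..<i} \<rightarrow>\<^sub>E UNIV" "s \<noteq> s'"
      show "closed_walks_signed d i n S s \<inter> closed_walks_signed d i n S s' = {}"
      proof (rule ccontr)
        assume "\<not> ?thesis"
        then obtain a b where "(a,b) \<in> closed_walks_signed d i n S s" "(a,b) \<in> closed_walks_signed d i n S s'" by auto
        then have "\<forall>j<i. s j = s' j" unfolding closed_walks_signed_def by auto
        then have "s = s'" using s by (intro PiE_ext[OF s(1) s(2)]) auto
        then show False using s by simp
      qed
    qed
  qed
  also have "\<dots> = (\<Sum>s\<in>{..<i} \<rightarrow>\<^sub>E (UNIV :: bool set). \<Prod>j<i. card (cell_steps d n S (\<not> s j) (s (Suc j mod i))))"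
    using card_closed_walks_signed[OF i] by simp
  finally show ?thesis .
qed

definition transfer :: "real \<Rightarrow> real \<Rightarrow> bool \<Rightarrow> bool \<Rightarrow> real" where
  "transfer \<alpha> \<beta> u v = (if u = v then \<alpha> else \<beta>)"

fun path_weight :: "real \<Rightarrow> real \<Rightarrow> bool \<Rightarrow> bool list \<Rightarrow> bool \<Rightarrow> real" where
  "path_weight \<alpha> \<beta> x [] y = transfer \<alpha> \<beta> x y"
| "path_weight \<alpha> \<beta> x (z # zs) y = transfer \<alpha> \<beta> x z * path_weight \<alpha> \<beta> z zs y"

lemma sum_bool_lists_Suc:
  "(\<Sum>xs\<in>{xs :: bool list. length xs = Suc n}. f xs) = (\<Sum>x\<in>UNIV. \<Sum>zs\<in>{zs. length zs = n}. f (x # zs))"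
proof -
  have "{xs :: bool list. length xs = Suc n} = (\<lambda>(zs, x). x # zs) ` ({zs. length zs = n} \<times> UNIV)"
    using lists_length_Suc_eq[of UNIV n] by simp
  then have "(\<Sum>xs\<in>{xs :: bool list. length xs = Suc n}. f xs) = (\<Sum>(zs,x)\<in>{zs. length zs = n} \<times> UNIV. f (x # zs))"
    by (simp add: sum.reindex inj_on_def split_def)
  also have "\<dots> = (\<Sum>zs\<in>{zs. length zs = n}. \<Sum>x\<in>UNIV. f (x # zs))"
    by (simp only: sum.cartesian_product)
  also have "\<dots> = (\<Sum>x\<in>UNIV. \<Sum>zs\<in>{zs. length zs = n}. f (x # zs))"
    by (rule sum.swap)
  finally show ?thesis .
qed

lemma sum_path_weight:
  "(\<Sum>zs\<in>{zs :: bool list. length zs = n}. path_weight \<alpha> \<beta> x zs y)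
     = ((\<alpha> + \<beta>) ^ Suc n + (if x = y then 1 else -1) * (\<alpha> - \<beta>) ^ Suc n) / 2"
proof (induction n arbitrary: x)
  case 0
  have "{zs :: bool list. length zs = 0} = {[]}" by auto
  then show ?case by (simp add: transfer_def)
next
  case (Suc n)
  have "(\<Sum>zs\<in>{zs :: bool list. length zs = Suc n}. path_weight \<alpha> \<beta> x zs y)
      = (\<Sum>z\<in>UNIV. \<Sum>zs\<in>{zs. length zs = n}. transfer \<alpha> \<beta> x z * path_weight \<alpha> \<beta> z zs y)"
    by (simp add: sum_bool_lists_Suc)
  also have "\<dots> = (\<Sum>z\<in>UNIV. transfer \<alpha> \<beta> x z * (((\<alpha> + \<beta>) ^ Suc n + (if z = y then 1 else -1) * (\<alpha> - \<beta>) ^ Suc n) / 2))"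
    by (simp add: sum_distrib_left[symmetric] Suc.IH)
  also have "\<dots> = ((\<alpha> + \<beta>) ^ Suc (Suc n) + (if x = y then 1 else -1) * (\<alpha> - \<beta>) ^ Suc (Suc n)) / 2"
    by (cases x; cases y) (simp_all add: UNIV_bool transfer_def field_simps)
  finally show ?case .
qed

lemma path_weight_prod:
  "path_weight \<alpha> \<beta> x zs y = (\<Prod>j<Suc (length zs). transfer \<alpha> \<beta> ((x # zs @ [y]) ! j) ((x # zs @ [y]) ! Suc j))"
proof (induction zs arbitrary: x)
  case Nil
  then show ?case by (simp del: prod.lessThan_Suc)
next
  case (Cons z zs)
  have "(\<Prod>j<Suc (length (z # zs)). transfer \<alpha> \<beta> ((x # (z # zs) @ [y]) ! j) ((x # (z # zs) @ [y]) ! Suc j))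
     = transfer \<alpha> \<beta> x z * (\<Prod>j<Suc (length zs). transfer \<alpha> \<beta> ((z # zs @ [y]) ! j) ((z # zs @ [y]) ! Suc j))"
    by (subst prod.lessThan_Suc_shift) (simp del: prod.lessThan_Suc)
  then show ?case using Cons.IH by (simp del: prod.lessThan_Suc)
qed

lemma closed_path_weight:
  assumes "length xs = Suc n"
  shows "(\<Prod>j<Suc n. transfer \<alpha> \<beta> (xs ! j) (xs ! (Suc j mod Suc n))) = path_weight \<alpha> \<beta> (hd xs) (tl xs) (hd xs)"
proof -
  obtain x zs where xs: "xs = x # zs" using assms by (cases xs) auto
  have lz: "length zs = n" using assms xs by simp
  have "path_weight \<alpha> \<beta> (hd xs) (tl xs) (hd xs) = (\<Prod>j<Suc n. transfer \<alpha> \<beta> ((x # zs @ [x]) ! j) ((x # zs @ [x]) ! Suc j))"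
    using path_weight_prod[of \<alpha> \<beta> x zs x] xs lz by (simp del: prod.lessThan_Suc)
  also have "\<dots> = (\<Prod>j<Suc n. transfer \<alpha> \<beta> (xs ! j) (xs ! (Suc j mod Suc n)))"
  proof (rule prod.cong[OF refl])
    fix j assume j: "j \<in> {..<Suc n}"
    have a: "(x # zs @ [x]) ! j = xs ! j" using j xs lz by (simp add: nth_append nth_Cons split: nat.splits)
    have b: "(x # zs @ [x]) ! Suc j = xs ! (Suc j mod Suc n)"
    proof (cases "Suc j = Suc n")
      case True then show ?thesis using xs lz by (simp add: nth_append)
    next
      case False then have "Suc j < Suc n" using j by simp
      then show ?thesis using xs lz by (simp add: nth_append)
    qed
    show "transfer \<alpha> \<beta> ((x # zs @ [x]) ! j) ((x # zs @ [x]) ! Suc j) = transfer \<alpha> \<beta> (xs ! j) (xs ! (Suc j mod Suc n))"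
      using a b by simp
  qed
  finally show ?thesis by simp
qed

lemma sum_PiE_bool_lists:
  "(\<Sum>s\<in>{..<i} \<rightarrow>\<^sub>E (UNIV :: bool set). F (\<lambda>j. s j)) = (\<Sum>xs\<in>{xs :: bool list. length xs = i}. F (\<lambda>j. xs ! j))"
  if "\<And>s s'. (\<And>j. j < i \<Longrightarrow> s j = s' j) \<Longrightarrow> F s = F s'"
proof (rule sum.reindex_bij_witness[where i = "\<lambda>xs. \<lambda>j\<in>{..<i}. xs ! j" and j = "\<lambda>s. map s [0..<i]"])
  fix s assume s: "s \<in> {..<i} \<rightarrow>\<^sub>E (UNIV :: bool set)"
  show "(\<lambda>j\<in>{..<i}. map s [0..<i] ! j) = s"
    by (rule extensionalityI[of _ "{..<i}"]) (use s in \<open>auto simp: PiE_iff\<close>)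
  show "map s [0..<i] \<in> {xs. length xs = i}" by simp
  show "F (\<lambda>j. map s [0..<i] ! j) = F (\<lambda>j. s j)" by (rule that) simp
next
  fix xs :: "bool list" assume xs: "xs \<in> {xs. length xs = i}"
  show "map (\<lambda>j\<in>{..<i}. xs ! j) [0..<i] = xs" using xs by (simp add: list_eq_iff_nth_eq)
  show "(\<lambda>j\<in>{..<i}. xs ! j) \<in> {..<i} \<rightarrow>\<^sub>E UNIV" by simp
qed

lemma sum_sign_cycles:
  assumes "0 < i"
  shows "(\<Sum>s\<in>{..<i} \<rightarrow>\<^sub>E (UNIV :: bool set). \<Prod>j<i. transfer \<alpha> \<beta> (s j) (s (Suc j mod i)))
          = (\<alpha> + \<beta>) ^ i + (\<alpha> - \<beta>) ^ i"
proof -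
  obtain n where n: "i = Suc n" using assms by (cases i) auto
  have "(\<Sum>s\<in>{..<i} \<rightarrow>\<^sub>E (UNIV :: bool set). \<Prod>j<i. transfer \<alpha> \<beta> (s j) (s (Suc j mod i)))
     = (\<Sum>xs\<in>{xs :: bool list. length xs = i}. \<Prod>j<i. transfer \<alpha> \<beta> (xs ! j) (xs ! (Suc j mod i)))"
  proof (rule sum_PiE_bool_lists[where F = "\<lambda>s. \<Prod>j<i. transfer \<alpha> \<beta> (s j) (s (Suc j mod i))"])
    fix s s' :: "nat \<Rightarrow> bool" assume h: "\<And>j. j < i \<Longrightarrow> s j = s' j"
    show "(\<Prod>j<i. transfer \<alpha> \<beta> (s j) (s (Suc j mod i))) = (\<Prod>j<i. transfer \<alpha> \<beta> (s' j) (s' (Suc j mod i)))"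
    proof (rule prod.cong[OF refl])
      fix j assume "j \<in> {..<i}"
      then show "transfer \<alpha> \<beta> (s j) (s (Suc j mod i)) = transfer \<alpha> \<beta> (s' j) (s' (Suc j mod i))"
        using h[of j] h[of "Suc j mod i"] assms by simp
    qed
  qed
  also have "\<dots> = (\<Sum>xs\<in>{xs :: bool list. length xs = Suc n}. path_weight \<alpha> \<beta> (hd xs) (tl xs) (hd xs))"
    using closed_path_weight n by simp
  also have "\<dots> = (\<Sum>x\<in>UNIV. \<Sum>zs\<in>{zs :: bool list. length zs = n}. path_weight \<alpha> \<beta> x zs x)"
    by (simp add: sum_bool_lists_Suc)
  also have "\<dots> = (\<alpha> + \<beta>) ^ i + (\<alpha> - \<beta>) ^ i"
    by (simp add: sum_path_weight UNIV_bool n field_simps)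
  finally show ?thesis .
qed

lemma cross_plus_same_side_steps:
  assumes "2 * p < d"
  shows "real (cross_steps d p) + real (same_side_steps d p) = real d * (real d - 1)"
    "real (cross_steps d p) - real (same_side_steps d p) = real d - (real d - 2 * real p) ^ 2"
proof -
  have pred: "real (x * (x - 1)) = real x * (real x - 1)" for x :: nat
    by (cases x) (simp_all add: algebra_simps)
  have dp: "real (d - p) = real d - real p"
    using assms by (simp add: of_nat_diff)
  have "real (cross_steps d p) = 2 * real p * (real d - real p)"
    unfolding cross_steps_def by (simp add: dp)
  moreover have "real (same_side_steps d p) =
      real p * (real p - 1) + (real d - real p) * (real d - real p - 1)"
    unfolding same_side_steps_def of_nat_add pred dp ..
  ultimately show "real (cross_steps d p) + real (same_side_steps d p) = real d * (real d - 1)"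
    "real (cross_steps d p) - real (same_side_steps d p) = real d - (real d - 2 * real p) ^ 2"
    by (simp_all add: algebra_simps power2_eq_square)
qed

lemma card_closed_walks_balanced:
  assumes d: "2 * p < d" and S: "S \<in> balanced_in_point_sets d p m" and i: "0 < i"
  shows "real (card (closed_walks d i (2 * m) S)) =
    real m ^ i * ((real d * (real d - 1)) ^ i + (real d - (real d - 2 * real p) ^ 2) ^ i)"
proof -
  let ?\<alpha> = "real (cross_steps d p)" and ?\<beta> = "real (same_side_steps d p)"
  have "real (card (closed_walks d i (2 * m) S)) =
      (\<Sum>s\<in>{..<i} \<rightarrow>\<^sub>E (UNIV :: bool set). \<Prod>j<i. real (card (cell_steps d (2 * m) S (\<not> s j) (s (Suc j mod i)))))"
    using card_closed_walks_sum_signs[OF i] by simp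
  also have "\<dots> = (\<Sum>s\<in>{..<i} \<rightarrow>\<^sub>E (UNIV :: bool set). \<Prod>j<i. real m * transfer ?\<alpha> ?\<beta> (s j) (s (Suc j mod i)))"
    using card_cell_steps_balanced[OF d S] by (intro sum.cong prod.cong refl) (auto simp: transfer_def)
  also have "\<dots> = real m ^ i * (\<Sum>s\<in>{..<i} \<rightarrow>\<^sub>E (UNIV :: bool set). \<Prod>j<i. transfer ?\<alpha> ?\<beta> (s j) (s (Suc j mod i)))"
    by (simp add: prod.distrib sum_distrib_left)
  also have "\<dots> = real m ^ i * ((?\<alpha> + ?\<beta>) ^ i + (?\<alpha> - ?\<beta>) ^ i)"
    by (simp add: sum_sign_cycles[OF i])
  finally show ?thesis
    unfolding cross_plus_same_side_steps[OF d] .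
qed

lemma card_not_inj_on_le:
  "card {v \<in> {..<i} \<rightarrow>\<^sub>E {..<(n::nat)}. \<not> inj_on v {..<i}} \<le> i * i * n ^ (i - 1)"
proof -
  let ?E = "\<lambda>j l. {v \<in> {..<i} \<rightarrow>\<^sub>E {..<n}. v j = v l}"
  have sub: "{v \<in> {..<i} \<rightarrow>\<^sub>E {..<n}. \<not> inj_on v {..<i}} \<subseteq> (\<Union>j<i. \<Union>l\<in>{..<i} - {j}. ?E j l)"
    unfolding inj_on_def by auto
  have E: "card (?E j l) \<le> n ^ (i - 1)" if j: "j < i" and l: "l \<in> {..<i} - {j}" for j l
  proof -
    have "card (?E j l) \<le> card ({..<i} - {l} \<rightarrow>\<^sub>E {..<n})"
    proof (rule card_inj_on_le)
      show "inj_on (\<lambda>v. restrict v ({..<i} - {l})) (?E j l)"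
      proof (rule inj_onI)
        fix v w assume v: "v \<in> ?E j l" and w: "w \<in> ?E j l" and eq: "restrict v ({..<i} - {l}) = restrict w ({..<i} - {l})"
        have jl: "j \<in> {..<i} - {l}" using j l by auto
        have agree: "v x = w x" if "x \<in> {..<i}" for x
        proof (cases "x = l")
          case True
          have "v j = w j" using fun_cong[OF eq, of j] jl by simp
          then show ?thesis using v w True by simp
        next
          case False
          then have "x \<in> {..<i} - {l}" using that by simp
          then show ?thesis using fun_cong[OF eq, of x] by simp
        qed
        show "v = w" using v w agree by (intro PiE_ext[of v "{..<i}" "\<lambda>_. {..<n}" w]) auto
      qed
      show "(\<lambda>v. restrict v ({..<i} - {l})) ` ?E j l \<subseteq> {..<i} - {l} \<rightarrow>\<^sub>E {..<n}"
      proof (rule image_subsetI)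
        fix v assume "v \<in> ?E j l"
        then have "\<forall>x\<in>{..<i}. v x \<in> {..<n}" by (simp add: PiE_iff)
        then show "restrict v ({..<i} - {l}) \<in> {..<i} - {l} \<rightarrow>\<^sub>E {..<n}"
          by (simp add: restrict_PiE_iff)
      qed
      show "finite ({..<i} - {l} \<rightarrow>\<^sub>E {..<n})" by (simp add: finite_PiE)
    qed
    also have "\<dots> = n ^ (i - 1)" using l by (simp add: card_PiE)
    finally show ?thesis .
  qed
  have "card {v \<in> {..<i} \<rightarrow>\<^sub>E {..<n}. \<not> inj_on v {..<i}} \<le> card (\<Union>j<i. \<Union>l\<in>{..<i} - {j}. ?E j l)"
    by (rule card_mono[OF _ sub]) (auto simp: finite_PiE)
  also have "\<dots> \<le> (\<Sum>j<i. card (\<Union>l\<in>{..<i} - {j}. ?E j l))" by (rule card_UN_le) simp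
  also have "\<dots> \<le> (\<Sum>j<i. i * n ^ (i - 1))"
  proof (rule sum_mono)
    fix j assume j: "j \<in> {..<i}"
    have "card (\<Union>l\<in>{..<i} - {j}. ?E j l) \<le> (\<Sum>l\<in>{..<i} - {j}. card (?E j l))" by (rule card_UN_le) simp
    also have "\<dots> \<le> (\<Sum>l\<in>{..<i} - {j}. n ^ (i - 1))" using E j by (intro sum_mono) auto
    also have "\<dots> = card ({..<i} - {j}) * n ^ (i - 1)" by simp
    also have "\<dots> \<le> i * n ^ (i - 1)" using card_Diff1_le[of "{..<i}" j] by (intro mult_right_mono) auto
    finally show "card (\<Union>l\<in>{..<i} - {j}. ?E j l) \<le> i * n ^ (i - 1)" .
  qed
  also have "\<dots> = i * i * n ^ (i - 1)" by simp
  finally show ?thesis .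
qed

text \<open>A closed walk is determined by the cells of its points \<open>a j\<close> and the positions of
  \<open>a j\<close> and \<open>b j\<close> inside their cells, because \<open>b j\<close> lies in the cell of \<open>a (j + 1)\<close>; for a walk
  that is not simple the sequence of cells is not injective.\<close>

lemma card_closed_walks_not_simple_le:
  assumes d: "0 < d"
  shows "card (closed_walks d i n S) - card (simple_closed_walks d i n S) \<le> i * i * n ^ (i - 1) * d ^ i * d ^ i"
proof -
  let ?B = "closed_walks d i n S - simple_closed_walks d i n S"
  let ?NI = "{v \<in> {..<i} \<rightarrow>\<^sub>E {..<n}. \<not> inj_on v {..<i}}"
  let ?f = "\<lambda>(a,b). ((\<lambda>j\<in>{..<i}. cm_cell d (a j)), (\<lambda>j\<in>{..<i}. a j mod d), (\<lambda>j\<in>{..<i}. b j mod d))"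
  have "card (closed_walks d i n S) - card (simple_closed_walks d i n S) = card ?B"
    by (rule card_Diff_subset[symmetric]) (use finite_simple_closed_walks in \<open>auto simp: simple_closed_walks_def\<close>)
  also have "card ?B \<le> card (?NI \<times> ({..<i} \<rightarrow>\<^sub>E {..<d}) \<times> ({..<i} \<rightarrow>\<^sub>E {..<d}))"
  proof (rule card_inj_on_le)
    show "inj_on ?f ?B"
    proof (rule inj_onI)
      fix r r' assume r: "r \<in> ?B" and r': "r' \<in> ?B" and eq: "?f r = ?f r'"
      obtain a b where ab: "r = (a,b)" by fastforce
      obtain a' b' where ab': "r' = (a',b')" by fastforce
      have T: "(a,b) \<in> closed_walks d i n S" "(a',b') \<in> closed_walks d i n S" using r r' ab ab' by auto
      have e1: "cm_cell d (a j) = cm_cell d (a' j)" "a j mod d = a' j mod d" "b j mod d = b' j mod d" if "j < i" for j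
        using eq that ab ab' by (auto dest!: fun_cong[of _ _ j])
      have ea: "a j = a' j" if "j < i" for j
        using e1[OF that] unfolding cm_cell_def by (metis div_mult_mod_eq)
      have eb: "b j = b' j" if j: "j < i" for j
      proof -
        have "cm_cell d (b j) = cm_cell d (b' j)"
          using closed_walksD(3)[OF T(1) j] closed_walksD(3)[OF T(2) j] e1(1)[OF Suc_mod_less[OF j]] by simp
        then show ?thesis using e1(3)[OF j] unfolding cm_cell_def by (metis div_mult_mod_eq)
      qed
      have "a = a'" using T ea unfolding closed_walks_def by (intro PiE_ext[of a "{..<i}" "\<lambda>_. cm_points d n" a']) auto
      moreover have "b = b'" using T eb unfolding closed_walks_def by (intro PiE_ext[of b "{..<i}" "\<lambda>_. cm_points d n" b']) auto
      ultimately show "r = r'" using ab ab' by simp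
    qed
    show "?f ` ?B \<subseteq> ?NI \<times> ({..<i} \<rightarrow>\<^sub>E {..<d}) \<times> ({..<i} \<rightarrow>\<^sub>E {..<d})"
    proof
      fix z assume "z \<in> ?f ` ?B"
      then obtain a b where ab: "(a,b) \<in> ?B" and z: "z = ?f (a,b)" by auto
      have T: "(a,b) \<in> closed_walks d i n S" and ni: "\<not> inj_on (\<lambda>j. cm_cell d (a j)) {..<i}"
        using ab unfolding simple_closed_walks_def by auto
      have "(\<lambda>j\<in>{..<i}. cm_cell d (a j)) \<in> ?NI"
      proof -
        have "cm_cell d (a j) < n" if "j < i" for j
          using closed_walksD(1)[OF T that] unfolding cm_points_def cm_cell_def
          by (simp add: less_mult_imp_div_less mult.commute)
        moreover have "\<not> inj_on (\<lambda>j\<in>{..<i}. cm_cell d (a j)) {..<i}"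
          using ni unfolding inj_on_def by auto
        ultimately show ?thesis by auto
      qed
      moreover have "(\<lambda>j\<in>{..<i}. a j mod d) \<in> {..<i} \<rightarrow>\<^sub>E {..<d}" using d by simp
      moreover have "(\<lambda>j\<in>{..<i}. b j mod d) \<in> {..<i} \<rightarrow>\<^sub>E {..<d}" using d by simp
      ultimately show "z \<in> ?NI \<times> ({..<i} \<rightarrow>\<^sub>E {..<d}) \<times> ({..<i} \<rightarrow>\<^sub>E {..<d})" using z by simp
    qed
    show "finite (?NI \<times> ({..<i} \<rightarrow>\<^sub>E {..<d}) \<times> ({..<i} \<rightarrow>\<^sub>E {..<d}))"
      by (auto simp: finite_PiE)
  qed
  also have "\<dots> = card ?NI * d ^ i * d ^ i" by (simp add: card_cartesian_product card_PiE)
  also have "\<dots> \<le> i * i * n ^ (i - 1) * d ^ i * d ^ i"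
    using card_not_inj_on_le[of i n] by simp
  finally show ?thesis .
qed


lemma card_cell_mod_less:
  assumes "p \<le> d" "v < n"
  shows "card {x \<in> cm_points d n. cm_cell d x = v \<and> x mod d < p} = p"
proof (cases "d = 0")
  case False
  have mod_eq: "x mod d = x - d * v" if "x \<in> {d * v..<d * v + d}" for x
  proof -
    have "x = (x - d * v) + d * v" "x - d * v < d"
      using that by auto
    then show ?thesis
      by (metis mod_less mod_mult_self2)
  qed
  have "{x \<in> cm_points d n. cm_cell d x = v \<and> x mod d < p} = {x \<in> {d * v..<d * v + d}. x mod d < p}"
    using cell_points_eq[of d v n] False assms(2) by blast
  also have "\<dots> = {x \<in> {d * v..<d * v + d}. x - d * v < p}"
    using mod_eq by auto
  also have "\<dots> = {d * v..<d * v + p}"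
    using assms(1) by auto
  finally show ?thesis
    by simp
qed (use assms in simp)

lemma balanced_in_point_sets_nonempty:
  assumes "2 * p < d"
  shows "balanced_in_point_sets d p m \<noteq> {}"
proof -
  define S where "S = {x \<in> cm_points d (2 * m). x mod d < p \<longleftrightarrow> cm_cell d x < m}"
  have in_cells: "in_count d (2 * m) S v = p" if "v < m" for v
  proof -
    have "{x \<in> cm_points d (2 * m). cm_cell d x = v \<and> x \<in> S} =
        {x \<in> cm_points d (2 * m). cm_cell d x = v \<and> x mod d < p}"
      using that unfolding S_def by auto
    then show ?thesis
      unfolding in_count_def using card_cell_mod_less[of p d v "2 * m"] assms that by simp
  qed
  have out_cells: "card (cell_side d (2 * m) S v False) = p" if "m \<le> v" "v < 2 * m" for v
  proof -
    have "cell_side d (2 * m) S v False = {x \<in> cm_points d (2 * m). cm_cell d x = v \<and> x mod d < p}"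
      using that unfolding S_def cell_side_def by auto
    then show ?thesis
      using card_cell_mod_less[of p d v "2 * m"] assms that by simp
  qed
  then have "in_count d (2 * m) S v = d - p" if "m \<le> v" "v < 2 * m" for v
    using that card_cell_side[of d v "2 * m" S False] in_count_le[of d v "2 * m" S] assms by auto
  then have "(\<Sum>v\<in>{m..<2 * m}. in_count d (2 * m) S v) = m * (d - p)"
    by simp
  moreover have "(\<Sum>v<m. in_count d (2 * m) S v) = m * p"
    using in_cells by simp
  moreover have "card S = (\<Sum>v<2 * m. in_count d (2 * m) S v)"
    using sum_in_count[of S d "2 * m"] unfolding S_def by auto
  ultimately have "card S = m * p + m * (d - p)"
    using sum.atLeastLessThan_concat[of 0 m "2 * m" "in_count d (2 * m) S"]
    by (simp add: lessThan_atLeast0)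
  then have "card S = d * m"
    using assms by (simp add: algebra_simps)
  moreover have "S \<in> in_point_sets d p (2 * m)"
    unfolding in_point_sets_def
  proof (intro CollectI conjI allI impI)
    show "S \<subseteq> cm_points d (2 * m)"
      unfolding S_def by blast
    fix v assume "v < 2 * m"
    then show "card {x \<in> cm_points d (2 * m). cm_cell d x = v \<and> x \<in> S} = p \<or>
        card {x \<in> cm_points d (2 * m). cm_cell d x = v \<and> x \<notin> S} = p"
      using in_cells out_cells unfolding in_count_def cell_side_def by (cases "v < m") simp_all
  qed
  ultimately show ?thesis
    unfolding balanced_in_point_sets_def by blast
qed

lemma crossing_cycles_bounds:
  assumes d: "2 * p < d" and S: "S \<in> balanced_in_point_sets d p m" and i: "0 < i"
  defines "w \<equiv> real m ^ i * ((real d * (real d - 1)) ^ i + (real d - (real d - 2 * real p) ^ 2) ^ i)"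
  defines "E \<equiv> real (i * i * (2 * m) ^ (i - 1) * d ^ i * d ^ i)"
  shows "w - E \<le> 2 * real i * real (card (crossing_cycles d i (2 * m) S))"
    "2 * real i * real (card (crossing_cycles d i (2 * m) S)) \<le> w"
proof -
  have "card (simple_closed_walks d i (2 * m) S) \<le> card (closed_walks d i (2 * m) S)"
    by (rule card_mono[OF finite_closed_walks]) (auto simp: simple_closed_walks_def)
  moreover have "card (closed_walks d i (2 * m) S) - card (simple_closed_walks d i (2 * m) S) \<le>
      i * i * (2 * m) ^ (i - 1) * d ^ i * d ^ i"
    using d by (intro card_closed_walks_not_simple_le) simp
  ultimately have "real (card (closed_walks d i (2 * m) S)) - E \<le> real (card (simple_closed_walks d i (2 * m) S))"
    "real (card (simple_closed_walks d i (2 * m) S)) \<le> real (card (closed_walks d i (2 * m) S))"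
    unfolding E_def by linarith+
  then show "w - E \<le> 2 * real i * real (card (crossing_cycles d i (2 * m) S))"
    "2 * real i * real (card (crossing_cycles d i (2 * m) S)) \<le> w"
    unfolding w_def card_closed_walks_balanced[OF d S i, symmetric] card_simple_closed_walks[OF i]
    by simp_all
qed

lemma expectation_ratio_bounds:
  assumes d: "2 * p < d" and i: "0 < i" "i \<le> m"
  defines "w \<equiv> real m ^ i * ((real d * (real d - 1)) ^ i + (real d - (real d - 2 * real p) ^ 2) ^ i)"
  defines "E \<equiv> real (i * i * (2 * m) ^ (i - 1) * d ^ i * d ^ i)"
  defines "P \<equiv> 2 * real i * (\<Prod>l<i. real (d * m - l))"
  shows "(w - E) / P \<le> cm_expect d (2 * m) (\<lambda>F. real (numY d p (2 * m) F * numX d i F))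
              / cm_expect d (2 * m) (\<lambda>F. real (numY d p (2 * m) F))"
    "cm_expect d (2 * m) (\<lambda>F. real (numY d p (2 * m) F * numX d i F))
              / cm_expect d (2 * m) (\<lambda>F. real (numY d p (2 * m) F)) \<le> w / P"
proof -
  let ?B = "balanced_in_point_sets d p m"
  let ?G = "\<Sum>S\<in>?B. 2 * real i * real (card (crossing_cycles d i (2 * m) S))"
  have "m \<le> d * m"
    using d by simp
  then have "i \<le> d * m"
    using i by linarith
  have V: "0 < real (card ?B)"
    using balanced_in_point_sets_nonempty[OF d] finite_balanced_in_point_sets
    by (simp add: card_gt_0_iff)
  have "0 < (\<Prod>l<i. real (d * m - l))"
  proof (rule prod_pos)
    fix l assume "l \<in> {..<i}"
    then have "l < d * m"
      using \<open>i \<le> d * m\<close> by simp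
    then show "0 < real (d * m - l)"
      by (metis of_nat_0_less_iff zero_less_diff)
  qed
  then have P: "0 < P"
    unfolding P_def using i by simp
  have ratio: "cm_expect d (2 * m) (\<lambda>F. real (numY d p (2 * m) F * numX d i F))
              / cm_expect d (2 * m) (\<lambda>F. real (numY d p (2 * m) F)) = ?G / (real (card ?B) * P)"
    unfolding expectation_ratio_eq[OF \<open>i \<le> d * m\<close>] P_def
    using i by (simp add: of_nat_sum sum_distrib_left[symmetric])
  have lower: "real (card ?B) * (w - E) \<le> ?G"
    using crossing_cycles_bounds(1)[OF d _ i(1)] unfolding w_def E_def by (rule sum_bounded_below)
  have upper: "?G \<le> real (card ?B) * w"
    using crossing_cycles_bounds(2)[OF d _ i(1)] unfolding w_def by (rule sum_bounded_above)
  have "(w - E) / P = real (card ?B) * (w - E) / (real (card ?B) * P)"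
    using V by simp
  also have "\<dots> \<le> ?G / (real (card ?B) * P)"
    using lower V P by (intro divide_right_mono) auto
  finally show "(w - E) / P \<le> cm_expect d (2 * m) (\<lambda>F. real (numY d p (2 * m) F * numX d i F))
              / cm_expect d (2 * m) (\<lambda>F. real (numY d p (2 * m) F))"
    unfolding ratio .
  have "?G / (real (card ?B) * P) \<le> real (card ?B) * w / (real (card ?B) * P)"
    using upper V P by (intro divide_right_mono) auto
  also have "\<dots> = w / P"
    using V by simp
  finally show "cm_expect d (2 * m) (\<lambda>F. real (numY d p (2 * m) F * numX d i F))
              / cm_expect d (2 * m) (\<lambda>F. real (numY d p (2 * m) F)) \<le> w / P"
    unfolding ratio .
qed

lemma tendsto_div_linear:
  assumes d: "0 < d"
  shows "(\<lambda>m. real m / real (d * m - l)) \<longlonglongrightarrow> 1 / real d"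
proof -
  have ev: "\<forall>\<^sub>F m in sequentially. 1 / (real d - real l / real m) = real m / real (d * m - l)"
  proof (rule eventually_sequentiallyI[of "Suc l"])
    fix m assume m: "Suc l \<le> m"
    have "m \<le> d * m" using d by simp
    then have le: "l \<le> d * m" using m by linarith
    have mp: "real m > 0" using m by simp
    have "real (d * m - l) = real d * real m - real l" using le by (simp add: of_nat_diff)
    then show "1 / (real d - real l / real m) = real m / real (d * m - l)"
      using mp by (simp add: field_simps)
  qed
  have "(\<lambda>m. 1 / (real d - real l / real m)) \<longlonglongrightarrow> 1 / (real d - 0)"
    using d by (intro tendsto_intros) auto
  then have "(\<lambda>m. 1 / (real d - real l / real m)) \<longlonglongrightarrow> 1 / real d" by simp
  then show ?thesis using ev by (rule Lim_transform_eventually)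
qed

lemma tendsto_power_div_falling:
  assumes d: "0 < d"
  shows "(\<lambda>m. real m ^ i / (\<Prod>l<i. real (d * m - l))) \<longlonglongrightarrow> (1 / real d) ^ i"
proof -
  have "(\<lambda>m. \<Prod>l<i. real m / real (d * m - l)) \<longlonglongrightarrow> (\<Prod>l<i. 1 / real d)"
    by (rule tendsto_prod) (rule tendsto_div_linear[OF d])
  moreover have "(\<lambda>m. \<Prod>l<i. real m / real (d * m - l)) = (\<lambda>m. real m ^ i / (\<Prod>l<i. real (d * m - l)))"
    by (simp add: prod_dividef)
  ultimately show ?thesis by simp
qed

lemma tendsto_sandwich_power:
  fixes f Q :: "nat \<Rightarrow> real"
  assumes bounds: "\<forall>\<^sub>F m in sequentially.
      (real m ^ i * c - K * real m ^ (i - 1)) / Q m \<le> f m \<and> f m \<le> real m ^ i * c / Q m"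
    and lim: "(\<lambda>m. real m ^ i / Q m) \<longlonglongrightarrow> L" and i: "0 < i"
  shows "f \<longlonglongrightarrow> c * L"
proof (rule tendsto_sandwich)
  have upper: "real m ^ i * c / Q m = c * (real m ^ i / Q m)" for m
    by simp
  have "real m ^ i * c - K * real m ^ (i - 1) = (c - K / real m) * real m ^ i" if "0 < m" for m
    using that i by (simp add: algebra_simps power_eq_if)
  then have "\<forall>\<^sub>F m in sequentially. (c - K * (1 / real m)) * (real m ^ i / Q m) =
      (real m ^ i * c - K * real m ^ (i - 1)) / Q m"
    by (intro eventually_sequentiallyI[of 1]) simp
  moreover have "(\<lambda>m. (c - K * (1 / real m)) * (real m ^ i / Q m)) \<longlonglongrightarrow> (c - K * 0) * L"
    by (intro tendsto_intros lim_const_over_n lim)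
  ultimately show "(\<lambda>m. (real m ^ i * c - K * real m ^ (i - 1)) / Q m) \<longlonglongrightarrow> c * L"
    using Lim_transform_eventually by fastforce
  show "(\<lambda>m. real m ^ i * c / Q m) \<longlonglongrightarrow> c * L"
    unfolding upper by (intro tendsto_mult_left lim)
qed (use bounds in \<open>auto elim: eventually_mono\<close>)

lemma delta_i_eq:
  "delta_i d p i = ((real d - (real d - 2 * real p) ^ 2) / (real d * (real d - 1))) ^ i"
proof -
  have "(real d)^2 - 4 * real d * real p + 4 * (real p)^2 - real d = (real d - 2 * real p) ^ 2 - real d"
    by (simp add: power2_eq_square algebra_simps)
  then show ?thesis
    unfolding delta_i_def by (simp only: minus_diff_eq)
qed

lemma delta_i_gt_minus_one:
  assumes "1 \<le> p" "2 * p < d" "1 \<le> i"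
  shows "delta_i d p i > -1"
proof -
  define q where "q = real d - 2 * real p"
  have q: "1 \<le> q" "q \<le> real d - 2"
    using assms unfolding q_def by linarith+
  then have "1 \<le> q ^ 2" "q ^ 2 < real d * real d"
    using mult_mono[of 1 q 1 q] mult_strict_mono[of q "real d" q "real d"]
    by (simp_all add: power2_eq_square)
  moreover have "2 < real d"
    using assms by linarith
  moreover have "2 * (real d - 1) \<le> real d * (real d - 1)"
    using \<open>2 < real d\<close> by (intro mult_right_mono) auto
  ultimately have "\<bar>real d - q ^ 2\<bar> < real d * (real d - 1)"
    by (simp add: abs_less_iff algebra_simps power2_eq_square)
  then have "\<bar>(real d - q ^ 2) / (real d * (real d - 1))\<bar> < 1"
    by (simp add: abs_divide)
  then have "\<bar>((real d - q ^ 2) / (real d * (real d - 1))) ^ i\<bar> < 1"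
    using assms(3) by (simp add: power_abs power_less_one_iff)
  then show ?thesis
    unfolding delta_i_eq q_def[symmetric] by (simp add: abs_less_iff)
qed

lemma closed_walk_limit_eq:
  assumes "1 < d"
  shows "((real d * (real d - 1)) ^ i + (real d - (real d - 2 * real p) ^ 2) ^ i) *
      ((1 / real d) ^ i / (2 * real i)) = lambda_i d i * (1 + delta_i d p i)"
proof -
  define X where "X = real d - (real d - 2 * real p) ^ 2"
  have "real d \<noteq> 0" "real d - 1 \<noteq> 0"
    using assms by auto
  then have "real d * (real d - 1) * (1 / real d) = real d - 1"
    "X * (1 / real d) = (real d - 1) * (X / (real d * (real d - 1)))"
    by simp_all
  then have "(real d * (real d - 1)) ^ i * (1 / real d) ^ i = (real d - 1) ^ i"
    "X ^ i * (1 / real d) ^ i = (real d - 1) ^ i * (X / (real d * (real d - 1))) ^ i"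
    by (simp_all only: power_mult_distrib[symmetric])
  then show ?thesis
    unfolding lambda_i_def delta_i_eq X_def[symmetric] by (simp add: algebra_simps)
qed

theorem lemma3p3:
  fixes d p i :: nat
  assumes "d \<ge> 4" and "1 \<le> p" and "2 * p < d" and "i \<ge> 1"
  shows "(\<lambda>m. cm_expect d (2 * m) (\<lambda>F. real (numY d p (2 * m) F * numX d i F))
              / cm_expect d (2 * m) (\<lambda>F. real (numY d p (2 * m) F)))
           \<longlonglongrightarrow> lambda_i d i * (1 + delta_i d p i)
         \<and> delta_i d p i > -1"
proof
  let ?r = "\<lambda>m. cm_expect d (2 * m) (\<lambda>F. real (numY d p (2 * m) F * numX d i F))
              / cm_expect d (2 * m) (\<lambda>F. real (numY d p (2 * m) F))"
  have i: "0 < i"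
    using assms by simp
  define c where "c = (real d * (real d - 1)) ^ i + (real d - (real d - 2 * real p) ^ 2) ^ i"
  define K where "K = real (i * i * 2 ^ (i - 1) * d ^ i * d ^ i)"
  define Q where "Q m = 2 * real i * (\<Prod>l<i. real (d * m - l))" for m
  have "(real m ^ i * c - K * real m ^ (i - 1)) / Q m \<le> ?r m \<and> ?r m \<le> real m ^ i * c / Q m"
    if "i \<le> m" for m
  proof -
    have "real (i * i * (2 * m) ^ (i - 1) * d ^ i * d ^ i) = K * real m ^ (i - 1)"
      unfolding K_def by (simp add: power_mult_distrib)
    moreover have "real m ^ i * ((real d * (real d - 1)) ^ i + (real d - (real d - 2 * real p) ^ 2) ^ i) =
        real m ^ i * c"
      unfolding c_def ..
    moreover have "2 * real i * (\<Prod>l<i. real (d * m - l)) = Q m"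
      unfolding Q_def ..
    ultimately show ?thesis
      using expectation_ratio_bounds[OF assms(3) i that] by (simp only:)
  qed
  then have "\<forall>\<^sub>F m in sequentially.
      (real m ^ i * c - K * real m ^ (i - 1)) / Q m \<le> ?r m \<and> ?r m \<le> real m ^ i * c / Q m"
    by (intro eventually_sequentiallyI[of i])
  moreover have "(\<lambda>m. real m ^ i / Q m) \<longlonglongrightarrow> (1 / real d) ^ i / (2 * real i)"
  proof -
    have "(\<lambda>m. real m ^ i / (\<Prod>l<i. real (d * m - l)) / (2 * real i)) \<longlonglongrightarrow> (1 / real d) ^ i / (2 * real i)"
      using assms by (intro tendsto_divide tendsto_const tendsto_power_div_falling) auto
    then show ?thesis
      unfolding Q_def by (simp add: divide_divide_eq_left ac_simps)
  qed
  ultimately have "?r \<longlonglongrightarrow> c * ((1 / real d) ^ i / (2 * real i))"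
    by (rule tendsto_sandwich_power[OF _ _ i])
  then show "?r \<longlonglongrightarrow> lambda_i d i * (1 + delta_i d p i)"
    using closed_walk_limit_eq[of d i p] assms unfolding c_def by simp
  show "delta_i d p i > -1"
    using assms by (intro delta_i_gt_minus_one) auto
qed

end
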